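(* Let $V$ be a commutative $\mathbb{C}$-algebra of functions of $x$ closed under $\partial_x$, $\mathbf t=(t_0=x,t_1,\dots)$, $u(\mathbf t)\in V[[t_1,t_2,\dots]]$ a solution of the KdV hierarchy, $\psi(z,\mathbf t)$ any wave function of $u$ and $\psi^*$ the dual wave function associated with $\psi$. With $$D(z,w,\mathbf t)=\frac{\psi(z,\mathbf t)\partial_x\psi^*(w,\mathbf t)-\psi^*(w,\mathbf t)\partial_x\psi(z,\mathbf t)}{w^2-z^2},$$ $$K(z,w,\mathbf t)=\frac{b(z^2,\mathbf t)\partial_xb(w^2,\mathbf t)-b(w^2,\mathbf t)\partial_xb(z^2,\mathbf t)}{2(w^2-z^2)}-\frac{w\,b(z^2,\mathbf t)+z\,b(w^2,\mathbf t)}{w^2-z^2},$$ one has $$K(z,w,\mathbf t)=b(z^2,\mathbf t)\frac{\psi(w,\mathbf t)}{\psi(z,\mathbf t)}D(z,w,\mathbf t)=b(w^2,\mathbf t)\frac{\psi^*(z,\mathbf t)}{\psi^*(w,\mathbf t)}D(z,w,\mathbf t)=\psi^*(z,\mathbf t)\psi(w,\mathbf t)D(z,w,\mathbf t).$$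
   Context: KdV hierarchy: $L=\partial_x^2+2u$, $A_k=\frac1{(2k+1)!!}(L^{(2k+1)/2})_+$; $u$ solves it if $\partial L/\partial t_k=[A_k,L]$ for all $k\ge0$. $b(\lambda,\mathbf t)=\sum_{k\ge-1}b_k(\mathbf t)\lambda^{-k-1}$, $b_{-1}=1$, is the unique such series with $b_k\in V[[t_{>0}]]$ satisfying $b b_{xx}-\frac12b_x^2-2(\lambda-2u)b^2=-2\lambda$. Wave functions: fix a ring $\widetilde V$ with $V\subseteq\partial_x(\widetilde V)\subseteq\widetilde V$; $\xi=\sum_{k\ge0}t_kz^{2k+1}/(2k+1)!!$. A wave function is $\psi=(1+\sum_{m\ge1}\phi_m(\mathbf t)z^{-m})e^{\xi}$, $\phi_m\in\widetilde V[[t_{>0}]]$, with $L\psi=z^2\psi$, $\partial_{t_k}\psi=A_k\psi$. The associated dual wave function is the unique $\psi^*=(1+\sum_{m\ge1}\phi_m^*(\mathbf t)z^{-m})e^{-\xi}$ with $L\psi^*=z^2\psi^*$, $\partial_{t_k}\psi^*=A_k\psi^*$, and such that $\partial_x^i(\psi)\psi^*$ (exponentials cancelling) has zero coefficient of $z^{-1}$ for all $i\ge0$. Products and quotients of wave functions are formal expressions in which the exponential factors combine in the obvious way. *)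

theory Defs
  imports Complex_Main "HOL-Library.Multiset"
begin

text \<open>The ring Vt (the paper's V-tilde) is the type 'a (a commutative ring).
  V is a subset of it.  dx is the derivation d/dx on Vt, sc the structure map
  of the C-algebra (complex scalars).\<close>

definition kdv_setting :: "(complex \<Rightarrow> 'a::comm_ring_1) \<Rightarrow> ('a \<Rightarrow> 'a) \<Rightarrow> 'a set \<Rightarrow> bool" where
  "kdv_setting sc dx V \<longleftrightarrow>
     sc 1 = 1 \<and> (\<forall>a b. sc (a + b) = sc a + sc b) \<and> (\<forall>a b. sc (a * b) = sc a * sc b) \<and>
     (\<forall>a b. dx (a + b) = dx a + dx b) \<and> (\<forall>a b. dx (a * b) = dx a * b + a * dx b) \<and>
     (\<forall>c. dx (sc c) = 0) \<and>
     range sc \<subseteq> V \<and>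
     (\<forall>a\<in>V. \<forall>b\<in>V. a + b \<in> V \<and> a * b \<in> V) \<and> (\<forall>a\<in>V. - a \<in> V) \<and>
     (\<forall>a\<in>V. dx a \<in> V) \<and>
     V \<subseteq> range dx"

text \<open>A monomial is a multiset of indices; the index j stands for the variable t_(j+1).\<close>

type_synonym mon = "nat multiset"
type_synonym 'a ser = "mon \<Rightarrow> 'a"

definition ser_zero :: "'a::comm_ring_1 ser" where "ser_zero = (\<lambda>M. 0)"
definition ser_one :: "'a::comm_ring_1 ser" where "ser_one = (\<lambda>M. if M = {#} then 1 else 0)"
definition ser_add :: "'a::comm_ring_1 ser \<Rightarrow> 'a ser \<Rightarrow> 'a ser" where
  "ser_add f g = (\<lambda>M. f M + g M)"
definition ser_sub :: "'a::comm_ring_1 ser \<Rightarrow> 'a ser \<Rightarrow> 'a ser" where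
  "ser_sub f g = (\<lambda>M. f M - g M)"
definition ser_scale :: "'a::comm_ring_1 \<Rightarrow> 'a ser \<Rightarrow> 'a ser" where
  "ser_scale c f = (\<lambda>M. c * f M)"
definition ser_mult :: "'a::comm_ring_1 ser \<Rightarrow> 'a ser \<Rightarrow> 'a ser" where
  "ser_mult f g = (\<lambda>M. \<Sum>N\<in>{N. N \<subseteq># M}. f N * g (M - N))"

text \<open>Partial derivative with respect to t_k; t_0 = x acts through dx on coefficients.\<close>
definition ser_dt :: "('a::comm_ring_1 \<Rightarrow> 'a) \<Rightarrow> nat \<Rightarrow> 'a ser \<Rightarrow> 'a ser" where
  "ser_dt dx k f = (if k = 0 then (\<lambda>M. dx (f M))
      else (\<lambda>M. of_nat (count M (k - 1) + 1) * f (add_mset (k - 1) M)))"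

definition ser_in :: "'a set \<Rightarrow> 'a ser \<Rightarrow> bool" where
  "ser_in S f \<longleftrightarrow> (\<forall>M. f M \<in> S)"

text \<open>F i is the coefficient of z^i.\<close>
type_synonym 'a lser = "int \<Rightarrow> 'a ser"

definition lmult :: "'a::comm_ring_1 lser \<Rightarrow> 'a lser \<Rightarrow> 'a lser" where
  "lmult F G = (\<lambda>i M. \<Sum>j\<in>{j. F j \<noteq> ser_zero \<and> G (i - j) \<noteq> ser_zero}. ser_mult (F j) (G (i - j)) M)"
definition ladd :: "'a::comm_ring_1 lser \<Rightarrow> 'a lser \<Rightarrow> 'a lser" where
  "ladd F G = (\<lambda>i. ser_add (F i) (G i))"
definition lsub :: "'a::comm_ring_1 lser \<Rightarrow> 'a lser \<Rightarrow> 'a lser" where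
  "lsub F G = (\<lambda>i. ser_sub (F i) (G i))"
definition lscale :: "'a::comm_ring_1 \<Rightarrow> 'a lser \<Rightarrow> 'a lser" where
  "lscale c F = (\<lambda>i. ser_scale c (F i))"
definition lconst :: "'a::comm_ring_1 ser \<Rightarrow> 'a lser" where
  "lconst f = (\<lambda>i. if i = 0 then f else ser_zero)"
definition lvar :: "'a::comm_ring_1 lser" where
  "lvar = (\<lambda>i. if i = 1 then ser_one else ser_zero)"
definition ldx :: "('a::comm_ring_1 \<Rightarrow> 'a) \<Rightarrow> 'a lser \<Rightarrow> 'a lser" where
  "ldx dx F = (\<lambda>i. ser_dt dx 0 (F i))"

text \<open>(d/dx + s z) acting on the series part: for a product F e^(s xi) one has
  d/dx (F e^(s xi)) = (shiftd dx s F) e^(s xi).\<close>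
definition shiftd :: "('a::comm_ring_1 \<Rightarrow> 'a) \<Rightarrow> 'a \<Rightarrow> 'a lser \<Rightarrow> 'a lser" where
  "shiftd dx s F = (\<lambda>i. ser_add (ser_dt dx 0 (F i)) (ser_scale s (F (i - 1))))"

text \<open>Series part 1 + sum_{m>=1} phi_m z^(-m) of a (dual) wave function.\<close>
definition wser :: "(nat \<Rightarrow> 'a::comm_ring_1 ser) \<Rightarrow> 'a lser" where
  "wser phi = (\<lambda>i. if i = 0 then ser_one else if i < 0 then phi (nat (- i)) else ser_zero)"

text \<open>P i is the coefficient of d^i (d = d/dx), written on the left.\<close>
type_synonym 'a psdo = "int \<Rightarrow> 'a ser"

definition psdo_one :: "'a::comm_ring_1 psdo" where
  "psdo_one = (\<lambda>i. if i = 0 then ser_one else ser_zero)"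
definition psdo_sub :: "'a::comm_ring_1 psdo \<Rightarrow> 'a psdo \<Rightarrow> 'a psdo" where
  "psdo_sub P Q = (\<lambda>i. ser_sub (P i) (Q i))"

definition ibinom :: "int \<Rightarrow> nat \<Rightarrow> int" where
  "ibinom i j = (\<Prod>l<j. i - int l) div fact j"

text \<open>Composition: d^i b = sum_{j>=0} binom(i,j) b^(j) d^(i-j).\<close>
definition psdo_mult :: "('a::comm_ring_1 \<Rightarrow> 'a) \<Rightarrow> 'a psdo \<Rightarrow> 'a psdo \<Rightarrow> 'a psdo" where
  "psdo_mult dx P Q = (\<lambda>m M. \<Sum>(i, k)\<in>{(i, k). P i \<noteq> ser_zero \<and> Q k \<noteq> ser_zero \<and> m \<le> i + k}.
       of_int (ibinom i (nat (i + k - m))) *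
       ser_mult (P i) ((ser_dt dx 0 ^^ nat (i + k - m)) (Q k)) M)"

definition psdo_pow :: "('a::comm_ring_1 \<Rightarrow> 'a) \<Rightarrow> 'a psdo \<Rightarrow> nat \<Rightarrow> 'a psdo" where
  "psdo_pow dx P n = (psdo_mult dx P ^^ n) psdo_one"

definition Lop :: "'a::comm_ring_1 ser \<Rightarrow> 'a psdo" where
  "Lop u = (\<lambda>i. if i = 2 then ser_one else if i = 0 then ser_scale 2 u else ser_zero)"

definition sqrtL :: "('a::comm_ring_1 \<Rightarrow> 'a) \<Rightarrow> 'a ser \<Rightarrow> 'a psdo" where
  "sqrtL dx u = (THE Q. Q 1 = ser_one \<and> (\<forall>i>1. Q i = ser_zero) \<and> psdo_mult dx Q Q = Lop u)"

definition dfact :: "nat \<Rightarrow> nat" where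
  "dfact k = (\<Prod>i\<le>k. 2 * i + 1)"

definition Aop :: "(complex \<Rightarrow> 'a::comm_ring_1) \<Rightarrow> ('a \<Rightarrow> 'a) \<Rightarrow> 'a ser \<Rightarrow> nat \<Rightarrow> 'a psdo" where
  "Aop sc dx u k = (\<lambda>i. if 0 \<le> i
      then ser_scale (sc (1 / of_nat (dfact k))) (psdo_pow dx (sqrtL dx u) (2 * k + 1) i)
      else ser_zero)"

definition kdv_solution :: "(complex \<Rightarrow> 'a::comm_ring_1) \<Rightarrow> ('a \<Rightarrow> 'a) \<Rightarrow> 'a ser \<Rightarrow> bool" where
  "kdv_solution sc dx u \<longleftrightarrow>
     (\<forall>k. (\<lambda>i. ser_dt dx k (Lop u i)) =
          psdo_sub (psdo_mult dx (Aop sc dx u k) (Lop u)) (psdo_mult dx (Lop u) (Aop sc dx u k)))"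

text \<open>A differential operator (nonnegative part of A) applied to F e^(s xi);
  the result is (apply_op dx s A F) e^(s xi).\<close>
definition apply_op :: "('a::comm_ring_1 \<Rightarrow> 'a) \<Rightarrow> 'a \<Rightarrow> 'a psdo \<Rightarrow> 'a lser \<Rightarrow> 'a lser" where
  "apply_op dx s A F = (\<lambda>i M. \<Sum>n\<in>{n::nat. A (int n) \<noteq> ser_zero}.
       ser_mult (A (int n)) ((shiftd dx s ^^ n) F i) M)"

text \<open>(1 + sum phi_m z^(-m)) e^(s xi) with s = 1 (wave function) or s = -1 (dual)
  satisfies L psi = z^2 psi and d psi / dt_k = A_k psi for all k.
  Note d/dt_k e^(s xi) = s z^(2k+1)/(2k+1)!! e^(s xi).\<close>
definition wave_eqs :: "(complex \<Rightarrow> 'a::comm_ring_1) \<Rightarrow> ('a \<Rightarrow> 'a) \<Rightarrow> 'a ser \<Rightarrow> 'a \<Rightarrow> (nat \<Rightarrow> 'a ser) \<Rightarrow> bool" where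
  "wave_eqs sc dx u s phi \<longleftrightarrow>
     apply_op dx s (Lop u) (wser phi) = (\<lambda>i. wser phi (i - 2)) \<and>
     (\<forall>k. (\<lambda>i. ser_add (ser_dt dx k (wser phi i))
                  (ser_scale (s * sc (1 / of_nat (dfact k))) (wser phi (i - int (2 * k + 1)))))
          = apply_op dx s (Aop sc dx u k) (wser phi))"

definition is_wave_function :: "(complex \<Rightarrow> 'a::comm_ring_1) \<Rightarrow> ('a \<Rightarrow> 'a) \<Rightarrow> 'a ser \<Rightarrow> (nat \<Rightarrow> 'a ser) \<Rightarrow> bool" where
  "is_wave_function sc dx u phi \<longleftrightarrow> wave_eqs sc dx u 1 phi"

text \<open>phis is (the series part of) the dual wave function associated with phi:
  the z^(-1) coefficient of (d^i psi) psi^* vanishes for all i.\<close>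
definition is_dual_wave_function :: "(complex \<Rightarrow> 'a::comm_ring_1) \<Rightarrow> ('a \<Rightarrow> 'a) \<Rightarrow> 'a ser \<Rightarrow> (nat \<Rightarrow> 'a ser) \<Rightarrow> (nat \<Rightarrow> 'a ser) \<Rightarrow> bool" where
  "is_dual_wave_function sc dx u phi phis \<longleftrightarrow>
     wave_eqs sc dx u (-1) phis \<and>
     (\<forall>i::nat. lmult ((shiftd dx 1 ^^ i) (wser phi)) (wser phis) (-1) = ser_zero)"

text \<open>b(lambda) as a Laurent series in lambda: coefficient of lambda^0 is b_(-1) = 1,
  coefficient of lambda^(-k-1) is b_k.\<close>
definition bser :: "(complex \<Rightarrow> 'a::comm_ring_1) \<Rightarrow> ('a \<Rightarrow> 'a) \<Rightarrow> 'a set \<Rightarrow> 'a ser \<Rightarrow> 'a lser" where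
  "bser sc dx V u = (THE B. B 0 = ser_one \<and> (\<forall>i>0. B i = ser_zero) \<and> (\<forall>i. ser_in V (B i)) \<and>
      lsub (lsub (lmult B (ldx dx (ldx dx B)))
                 (lscale (sc (1/2)) (lmult (ldx dx B) (ldx dx B))))
           (lscale 2 (lmult (lsub lvar (lconst (ser_scale 2 u))) (lmult B B)))
      = lscale (-2) lvar)"

text \<open>Substitution lambda := z^2.\<close>
definition lsq :: "'a::comm_ring_1 lser \<Rightarrow> 'a lser" where
  "lsq F = (\<lambda>i. if even i then F (i div 2) else ser_zero)"

text \<open>P i j is the coefficient of z^i w^j.\<close>
type_synonym 'a bser = "int \<Rightarrow> int \<Rightarrow> 'a ser"

definition bz :: "'a::comm_ring_1 lser \<Rightarrow> 'a bser" where
  "bz F = (\<lambda>i j. if j = 0 then F i else ser_zero)"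
definition bw :: "'a::comm_ring_1 lser \<Rightarrow> 'a bser" where
  "bw F = (\<lambda>i j. if i = 0 then F j else ser_zero)"
definition bmult :: "'a::comm_ring_1 bser \<Rightarrow> 'a bser \<Rightarrow> 'a bser" where
  "bmult P Q = (\<lambda>i j M. \<Sum>(a, c)\<in>{(a, c). P a c \<noteq> ser_zero \<and> Q (i - a) (j - c) \<noteq> ser_zero}.
       ser_mult (P a c) (Q (i - a) (j - c)) M)"
definition badd :: "'a::comm_ring_1 bser \<Rightarrow> 'a bser \<Rightarrow> 'a bser" where
  "badd P Q = (\<lambda>i j. ser_add (P i j) (Q i j))"
definition bsub :: "'a::comm_ring_1 bser \<Rightarrow> 'a bser \<Rightarrow> 'a bser" where
  "bsub P Q = (\<lambda>i j. ser_sub (P i j) (Q i j))"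
definition bscale :: "'a::comm_ring_1 \<Rightarrow> 'a bser \<Rightarrow> 'a bser" where
  "bscale c P = (\<lambda>i j. ser_scale c (P i j))"
definition bdx :: "('a::comm_ring_1 \<Rightarrow> 'a) \<Rightarrow> 'a bser \<Rightarrow> 'a bser" where
  "bdx dx P = (\<lambda>i j. ser_dt dx 0 (P i j))"
definition bbdd :: "'a::comm_ring_1 bser \<Rightarrow> bool" where
  "bbdd P \<longleftrightarrow> (\<exists>n. \<forall>i j. n < i \<or> n < j \<longrightarrow> P i j = ser_zero)"
text \<open>Quotient P / Q (Q will be a unit).\<close>
definition bquot :: "'a::comm_ring_1 bser \<Rightarrow> 'a bser \<Rightarrow> 'a bser" where
  "bquot P Q = (THE R. bbdd R \<and> bmult Q R = P)"

text \<open>(w^2 - z^2) D(z,w) with the factor e^(xi(z) - xi(w)) removed: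
  psi(z) d psi^*(w) - psi^*(w) d psi(z).\<close>
definition Dnum :: "('a::comm_ring_1 \<Rightarrow> 'a) \<Rightarrow> (nat \<Rightarrow> 'a ser) \<Rightarrow> (nat \<Rightarrow> 'a ser) \<Rightarrow> 'a bser" where
  "Dnum dx phi phis =
     bsub (bmult (bz (wser phi)) (bw (shiftd dx (-1) (wser phis))))
          (bmult (bw (wser phis)) (bz (shiftd dx 1 (wser phi))))"

definition Knum :: "(complex \<Rightarrow> 'a::comm_ring_1) \<Rightarrow> ('a \<Rightarrow> 'a) \<Rightarrow> 'a set \<Rightarrow> 'a ser \<Rightarrow> 'a bser" where
  "Knum sc dx V u =
     (let Bz = bz (lsq (bser sc dx V u)); Bw = bw (lsq (bser sc dx V u)) in
      bsub (bscale (sc (1/2)) (bsub (bmult Bz (bdx dx Bw)) (bmult Bw (bdx dx Bz))))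
           (badd (bmult (bw lvar) Bz) (bmult (bz lvar) Bw)))"

end

theory Submission
  imports Defs "HOL-Computational_Algebra.Formal_Laurent_Series"
begin

text \<open>Write \<open>\<psi> = f e\<^sup>x\<^sup>z\<close> and \<open>\<psi>\<^sup>* = g e\<^sup>-\<^sup>x\<^sup>z\<close>. Then \<open>L\<psi> = z\<^sup>2\<psi>\<close> reads \<open>f'' + 2zf' + 2uf = 0\<close>, and
  similarly \<open>g'' - 2zg' + 2ug = 0\<close>; the duality condition says that the \<open>z\<^sup>-\<^sup>1\<close>-coefficients of
  \<open>((\<partial> + z)\<^sup>if) g\<close> vanish. The wave equation propagates this to all odd negative powers of \<open>z\<close>, so
  \<open>R = fg\<close> is even in \<open>z\<close> and the Wronskian \<open>W = fg' - f'g - 2zfg\<close> equals \<open>-2z\<close>. A direct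
  computation gives \<open>2RR'' - R'\<^sup>2 - 4(z\<^sup>2 - 2u)R\<^sup>2 = -W\<^sup>2 = -4z\<^sup>2\<close>, which is the equation of \<open>b\<close> at
  \<open>\<lambda> = z\<^sup>2\<close>; as that equation determines \<open>b\<^sub>k\<^sub>+\<^sub>1\<close> from \<open>b\<^sub>0, \<dots>, b\<^sub>k\<close>, we get \<open>b(z\<^sup>2) = \<psi>(z)\<psi>\<^sup>*(z)\<close>.
  Together with the Wronskian identity in \<open>z\<close> and in \<open>w\<close>, the three formulas for \<open>K\<close> become
  ring identities.\<close>

section \<open>Power series in the times\<close>

lemma finite_submultisets: "finite {N. N \<subseteq># (M::'b multiset)}"
proof (induction M)
  case empty then show ?case by simp
next
  case (add x M)
  have "{N. N \<subseteq># add_mset x M} \<subseteq> {N. N \<subseteq># M} \<union> add_mset x ` {N. N \<subseteq># M}"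
  proof
    fix N assume N: "N \<in> {N. N \<subseteq># add_mset x M}"
    show "N \<in> {N. N \<subseteq># M} \<union> add_mset x ` {N. N \<subseteq># M}"
    proof (cases "x \<in># N")
      case True
      then have "N = add_mset x (N - {#x#})" and "N - {#x#} \<subseteq># M"
        using N by (simp, metis insert_DiffM add_mset_remove_trivial insert_subset_eq_iff mem_Collect_eq)
      then show ?thesis by blast
    next
      case False
      then have "N \<subseteq># M" using N
        by (metis Diff_eq_empty_iff_mset mem_Collect_eq minus_add_mset_if_not_in_lhs)
      then show ?thesis by blast
    qed
  qed
  then show ?case using add.IH by (meson finite_Un finite_imageI finite_subset)
qed

lemma ser_mult_commute: "ser_mult f g M = ser_mult g f M"
proof -
  have "M - (M - N) = N" if "N \<subseteq># M" for N
    using that by (metis add.commute diff_union_cancelR subset_mset.diff_add)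
  then show ?thesis
    unfolding ser_mult_def
    by (intro sum.reindex_bij_witness[where i="\<lambda>N. M - N" and j="\<lambda>N. M - N"])
       (auto simp: mult.commute)
qed

lemma ser_mult_assoc: "ser_mult (ser_mult f g) h M = ser_mult f (ser_mult g h) M"
  for f g h :: "'a::comm_ring_1 ser"
proof -
  have add_le: "x + y \<subseteq># M" if "x \<subseteq># M" "y \<subseteq># M - x" for x y :: "nat multiset"
    using that by (simp add: add.commute subset_mset.le_diff_conv2)
  have "ser_mult (ser_mult f g) h M =
      (\<Sum>(A, N)\<in>Sigma {A. A \<subseteq># M} (\<lambda>A. {N. N \<subseteq># A}). f N * g (A - N) * h (M - A))"
    unfolding ser_mult_def sum_distrib_right by (rule sum.Sigma) (auto simp: finite_submultisets)
  also have "\<dots> = (\<Sum>(N, K)\<in>Sigma {N. N \<subseteq># M} (\<lambda>N. {K. K \<subseteq># M - N}). f N * (g K * h (M - N - K)))"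
    apply (rule sum.reindex_bij_witness[where i="\<lambda>(N, K). (N + K, N)" and j="\<lambda>(A, N). (N, A - N)"])
    apply (auto simp: add_le subset_mset.add_diff_inverse mult.assoc)
    using subset_eq_diff_conv subset_mset.diff_add by fastforce
  also have "\<dots> = ser_mult f (ser_mult g h) M"
    unfolding ser_mult_def sum_distrib_left by (rule sum.Sigma[symmetric]) (auto simp: finite_submultisets)
  finally show ?thesis .
qed

typedef 'a tser = "UNIV :: (nat multiset \<Rightarrow> 'a) set" morphisms tser_nth Abs_tser
  by simp

lemma tser_nth_Abs_tser [simp]: "tser_nth (Abs_tser f) = f"
  by (simp add: Abs_tser_inverse)

lemma Abs_tser_tser_nth [simp]: "Abs_tser (tser_nth a) = a"
  by (rule tser_nth_inverse)

lemma tser_eq_iff: "a = b \<longleftrightarrow> (\<forall>M. tser_nth a M = tser_nth b M)"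
  by (metis tser_nth_inject ext)

instantiation tser :: (comm_ring_1) comm_ring_1
begin
definition zero_tser_def: "0 = Abs_tser ser_zero"
definition one_tser_def: "1 = Abs_tser ser_one"
definition plus_tser_def: "a + b = Abs_tser (ser_add (tser_nth a) (tser_nth b))"
definition minus_tser_def: "a - b = Abs_tser (ser_sub (tser_nth a) (tser_nth b))"
definition uminus_tser_def: "- a = Abs_tser (\<lambda>M. - tser_nth a M)"
definition times_tser_def: "a * b = Abs_tser (ser_mult (tser_nth a) (tser_nth b))"
instance
proof
  fix a b c :: "'a tser"
  have unit: "(\<Sum>N\<in>{N. N \<subseteq># M}. (if N = {#} then 1 else 0) * f (M - N)) = f M"
    for f :: "'a ser" and M
  proof -
    have "(\<Sum>N\<in>{N. N \<subseteq># M}. (if N = {#} then 1 else 0) * f (M - N)) =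
        (\<Sum>N\<in>{N. N \<subseteq># M}. if N = {#} then f (M - N) else 0)"
      by (rule sum.cong) auto
    then show ?thesis by (simp add: finite_submultisets)
  qed
  show "a * b * c = a * (b * c)"
    by (simp add: times_tser_def tser_eq_iff ser_mult_assoc)
  show "a * b = b * a"
    by (simp add: times_tser_def tser_eq_iff ser_mult_commute)
  show "1 * a = a"
    by (simp add: times_tser_def one_tser_def tser_eq_iff ser_mult_def ser_one_def unit)
  show "a + b + c = a + (b + c)"
    by (simp add: plus_tser_def tser_eq_iff ser_add_def add.assoc)
  show "a + b = b + a"
    by (simp add: plus_tser_def tser_eq_iff ser_add_def add.commute)
  show "0 + a = a"
    by (simp add: plus_tser_def zero_tser_def tser_eq_iff ser_add_def ser_zero_def)
  show "- a + a = 0"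
    by (simp add: plus_tser_def zero_tser_def uminus_tser_def tser_eq_iff ser_add_def ser_zero_def)
  show "a - b = a + - b"
    by (simp add: plus_tser_def minus_tser_def uminus_tser_def tser_eq_iff ser_add_def ser_sub_def)
  show "(a + b) * c = a * c + b * c"
    by (simp add: plus_tser_def times_tser_def tser_eq_iff ser_add_def ser_mult_def
        distrib_right sum.distrib)
  show "(0::'a tser) \<noteq> 1"
    by (simp add: zero_tser_def one_tser_def tser_eq_iff ser_zero_def ser_one_def)
qed
end

lemma tser_nth_zero [simp]: "tser_nth 0 = ser_zero" by (simp add: zero_tser_def)
lemma tser_nth_one [simp]: "tser_nth 1 = ser_one" by (simp add: one_tser_def)
lemma tser_nth_add [simp]: "tser_nth (a + b) M = tser_nth a M + tser_nth b M"
  by (simp add: plus_tser_def ser_add_def)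
lemma tser_nth_diff [simp]: "tser_nth (a - b) M = tser_nth a M - tser_nth b M"
  by (simp add: minus_tser_def ser_sub_def)
lemma tser_nth_uminus [simp]: "tser_nth (- a) M = - tser_nth a M"
  by (simp add: uminus_tser_def)
lemma tser_nth_mult: "tser_nth (a * b) = ser_mult (tser_nth a) (tser_nth b)"
  by (simp add: times_tser_def)
lemma tser_nth_sum: "tser_nth (sum f S) M = (\<Sum>x\<in>S. tser_nth (f x) M)"
  by (induction S rule: infinite_finite_induct) (auto simp: ser_zero_def)
lemma Abs_tser_zero: "Abs_tser ser_zero = 0" by (simp add: zero_tser_def)
lemma tser_nth_eq_zero_iff: "tser_nth a = ser_zero \<longleftrightarrow> a = 0"
  by (metis tser_nth_inject tser_nth_zero)

definition tser_const :: "'a::comm_ring_1 \<Rightarrow> 'a tser" where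
  "tser_const c = Abs_tser (\<lambda>M. if M = {#} then c else 0)"

lemma tser_nth_const_mult: "tser_nth (tser_const c * a) M = c * tser_nth a M"
proof -
  have "(\<Sum>N\<in>{N. N \<subseteq># M}. (if N = {#} then c else 0) * tser_nth a (M - N)) =
      (\<Sum>N\<in>{N. N \<subseteq># M}. if N = {#} then c * tser_nth a (M - N) else 0)"
    by (rule sum.cong) auto
  then show ?thesis
    by (simp add: tser_nth_mult tser_const_def ser_mult_def finite_submultisets)
qed

lemma ser_scale_eq: "ser_scale c f = tser_nth (tser_const c * Abs_tser f)"
  by (rule ext) (simp add: tser_nth_const_mult ser_scale_def)

lemma tser_const_uminus: "tser_const (- a) = - tser_const a"
  by (simp add: tser_const_def tser_eq_iff)
lemma tser_const_mult: "tser_const (a * b) = tser_const a * tser_const b"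
  by (simp add: tser_eq_iff tser_nth_const_mult) (simp add: tser_const_def)
lemma tser_const_one [simp]: "tser_const 1 = 1"
  by (simp add: tser_const_def tser_eq_iff ser_one_def)
lemma tser_const_numeral [simp]: "tser_const (numeral n) = numeral n"
proof -
  have add: "tser_const (a + b) = tser_const a + tser_const b" for a b
    by (simp add: tser_const_def tser_eq_iff)
  have zero: "tser_const 0 = 0"
    by (simp add: tser_const_def tser_eq_iff ser_zero_def)
  have "tser_const (of_nat n) = of_nat n" for n
    by (induction n) (simp_all add: add zero)
  from this[of "numeral n"] show ?thesis by simp
qed

lemma ser_mult_one: "ser_mult ser_one f = f"
  by (metis tser_nth_Abs_tser tser_nth_one tser_nth_mult mult_1)

definition derivation :: "('r::comm_ring_1 \<Rightarrow> 'r) \<Rightarrow> bool" where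
  "derivation d \<longleftrightarrow> (\<forall>a b. d (a + b) = d a + d b) \<and> (\<forall>a b. d (a * b) = d a * b + a * d b)"

lemma derivation_add: "derivation d \<Longrightarrow> d (a + b) = d a + d b"
  by (simp add: derivation_def)
lemma derivation_mult: "derivation d \<Longrightarrow> d (a * b) = d a * b + a * d b"
  by (simp add: derivation_def)
lemma derivation_zero: "derivation d \<Longrightarrow> d 0 = 0"
  using derivation_add[of d 0 0] by simp
lemma derivation_uminus: "derivation d \<Longrightarrow> d (- a) = - d a"
  using derivation_add[of d a "- a"] derivation_zero[of d]
  by (simp add: eq_neg_iff_add_eq_0 add.commute)
lemma derivation_sum: "derivation d \<Longrightarrow> d (sum f S) = (\<Sum>x\<in>S. d (f x))"
  by (induction S rule: infinite_finite_induct) (auto simp: derivation_zero derivation_add)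

definition ring_hom_fun :: "('b::comm_ring_1 \<Rightarrow> 'c::comm_ring_1) \<Rightarrow> bool" where
  "ring_hom_fun h \<longleftrightarrow> (\<forall>a b. h (a + b) = h a + h b) \<and> (\<forall>a b. h (a * b) = h a * h b) \<and> h 1 = 1"

lemma ring_hom_fun_add: "ring_hom_fun h \<Longrightarrow> h (a + b) = h a + h b"
  by (simp add: ring_hom_fun_def)
lemma ring_hom_fun_mult: "ring_hom_fun h \<Longrightarrow> h (a * b) = h a * h b"
  by (simp add: ring_hom_fun_def)
lemma ring_hom_fun_one: "ring_hom_fun h \<Longrightarrow> h 1 = 1"
  by (simp add: ring_hom_fun_def)
lemma ring_hom_fun_zero: "ring_hom_fun h \<Longrightarrow> h 0 = 0"
  using ring_hom_fun_add[of h 0 0] by simp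
lemma ring_hom_fun_uminus: "ring_hom_fun h \<Longrightarrow> h (- a) = - h a"
  using ring_hom_fun_add[of h a "- a"] ring_hom_fun_zero[of h]
  by (simp add: eq_neg_iff_add_eq_0 add.commute)
lemma ring_hom_fun_diff: "ring_hom_fun h \<Longrightarrow> h (a - b) = h a - h b"
  using ring_hom_fun_add[of h a "- b"] ring_hom_fun_uminus[of h b] by simp
lemma ring_hom_fun_sum: "ring_hom_fun h \<Longrightarrow> h (sum f S) = (\<Sum>x\<in>S. h (f x))"
  by (induction S rule: infinite_finite_induct) (auto simp: ring_hom_fun_zero ring_hom_fun_add)
lemma ring_hom_fun_numeral: "ring_hom_fun h \<Longrightarrow> h (numeral n) = numeral n"
proof -
  assume h: "ring_hom_fun h"
  have "h (of_nat n) = of_nat n" for n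
    by (induction n) (simp_all add: h ring_hom_fun_zero ring_hom_fun_add ring_hom_fun_one)
  from this[of "numeral n"] show ?thesis by simp
qed

definition tser_dx :: "('a::comm_ring_1 \<Rightarrow> 'a) \<Rightarrow> 'a tser \<Rightarrow> 'a tser" where
  "tser_dx dx a = Abs_tser (\<lambda>M. dx (tser_nth a M))"

lemma tser_nth_dx [simp]: "tser_nth (tser_dx dx a) M = dx (tser_nth a M)"
  by (simp add: tser_dx_def)

lemma derivation_tser_dx:
  assumes "derivation dx" shows "derivation (tser_dx dx)"
  unfolding derivation_def
proof (intro conjI allI)
  fix a b :: "'a tser"
  show "tser_dx dx (a + b) = tser_dx dx a + tser_dx dx b"
    by (simp add: tser_eq_iff derivation_add[OF assms])
  show "tser_dx dx (a * b) = tser_dx dx a * b + a * tser_dx dx b"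
    by (simp add: tser_eq_iff tser_nth_mult ser_mult_def derivation_sum[OF assms]
        derivation_mult[OF assms] sum.distrib)
qed

lemma ser_dt_0_eq: "ser_dt dx 0 f = tser_nth (tser_dx dx (Abs_tser f))"
  by (simp add: ser_dt_def fun_eq_iff)

section \<open>Laurent series\<close>

unbundle fps_syntax

lemma fls_times_nth_bounded:
  fixes f g :: "'b::comm_ring_1 fls"
  assumes f: "\<And>i. i < a \<Longrightarrow> f $$ i = 0" and g: "\<And>i. i < b \<Longrightarrow> g $$ i = 0"
  shows "(f * g) $$ n = (\<Sum>i=a..n-b. f $$ i * g $$ (n-i))"
proof (cases "f = 0 \<or> g = 0")
  case False
  then have "a \<le> fls_subdegree f" "b \<le> fls_subdegree g"
    using f g fls_subdegree_geI by blast+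
  moreover have "f $$ i * g $$ (n - i) = 0"
    if "i < fls_subdegree f \<or> n - i < fls_subdegree g" for i
    using that by auto
  ultimately show ?thesis
    unfolding fls_times_nth(2) by (intro sum.mono_neutral_left) auto
qed auto

lemma fls_times_nth_nonneg:
  fixes f g :: "'b::comm_ring_1 fls"
  assumes "\<forall>k<0. f $$ k = 0" and "\<forall>k<0. g $$ k = 0"
  shows "(f * g) $$ int k = (\<Sum>i\<le>k. f $$ int i * g $$ int (k - i))"
proof -
  have "{0..int k} = int ` {..k}"
  proof
    show "{0..int k} \<subseteq> int ` {..k}"
      by (auto intro!: rev_image_eqI[of "nat _"])
  qed auto
  then show ?thesis
    using assms by (subst fls_times_nth_bounded[where a=0 and b=0])
      (auto simp: sum.reindex of_nat_diff intro!: sum.cong)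
qed

lemma fls_times_nth_neg:
  fixes f g :: "'b::comm_ring_1 fls"
  assumes "\<forall>k<0. f $$ k = 0" and "\<forall>k<0. g $$ k = 0" and "k < 0"
  shows "(f * g) $$ k = 0"
  using assms by (subst fls_times_nth_bounded[where a=0 and b=0]) auto

lemma fls_sum_nth: "(sum f S) $$ k = (\<Sum>x\<in>S. f x $$ k)"
  by (induction S rule: infinite_finite_induct) auto

definition fls_map :: "('b::zero \<Rightarrow> 'c::zero) \<Rightarrow> 'b fls \<Rightarrow> 'c fls" where
  "fls_map h f = Abs_fls (\<lambda>k. h (f $$ k))"

lemma fls_map_nth [simp]: "h 0 = 0 \<Longrightarrow> fls_map h f $$ k = h (f $$ k)"
  unfolding fls_map_def
  by (rule nth_Abs_fls_lower_bound[where N="fls_subdegree f"]) auto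

lemma fls_map_add: "(\<And>a b. h (a + b) = h a + h b) \<Longrightarrow> h 0 = 0 \<Longrightarrow> fls_map h (f + g) = fls_map h f + fls_map h g"
  by (rule fls_eqI) simp

lemma fls_map_const: "h 0 = 0 \<Longrightarrow> fls_map h (fls_const c) = fls_const (h c)"
  by (rule fls_eqI) simp

lemma fls_map_mult:
  fixes f g :: "'b::comm_ring_1 fls"
  assumes h: "ring_hom_fun (h :: 'b \<Rightarrow> 'c::comm_ring_1)"
  shows "fls_map h (f * g) = fls_map h f * fls_map h g"
proof (rule fls_eqI)
  fix n
  have "fls_map h (f * g) $$ n = (\<Sum>i=fls_subdegree f..n-fls_subdegree g. h (f $$ i) * h (g $$ (n-i)))"
    by (simp add: h fls_times_nth(2) ring_hom_fun_zero ring_hom_fun_sum ring_hom_fun_mult)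
  also have "\<dots> = (fls_map h f * fls_map h g) $$ n"
    by (subst fls_times_nth_bounded[where a="fls_subdegree f" and b="fls_subdegree g"])
      (simp_all add: h ring_hom_fun_zero)
  finally show "fls_map h (f * g) $$ n = (fls_map h f * fls_map h g) $$ n" .
qed

lemma fls_map_mult_derivation:
  fixes f g :: "'b::comm_ring_1 fls"
  assumes d: "derivation d"
  shows "fls_map d (f * g) = fls_map d f * g + f * fls_map d g"
proof (rule fls_eqI)
  fix n
  have "fls_map d (f * g) $$ n = (\<Sum>i=fls_subdegree f..n-fls_subdegree g. d (f $$ i) * g $$ (n-i))
                + (\<Sum>i=fls_subdegree f..n-fls_subdegree g. f $$ i * d (g $$ (n-i)))"
    by (simp add: d fls_times_nth(2) derivation_zero derivation_sum derivation_mult sum.distrib)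
  also have "\<dots> = (fls_map d f * g) $$ n + (f * fls_map d g) $$ n"
    by (subst (1 2) fls_times_nth_bounded[where a="fls_subdegree f" and b="fls_subdegree g"])
       (simp_all add: d derivation_zero)
  finally show "fls_map d (f * g) $$ n = (fls_map d f * g + f * fls_map d g) $$ n" by simp
qed

lemma derivation_fls_map: "derivation d \<Longrightarrow> derivation (fls_map d)"
  unfolding derivation_def
  by (simp add: fls_map_mult_derivation[unfolded derivation_def] fls_map_add
      derivation_zero[unfolded derivation_def])

lemma ring_hom_fun_fls_map: "ring_hom_fun h \<Longrightarrow> ring_hom_fun (fls_map h)"
  by (auto simp: ring_hom_fun_def fls_map_mult[unfolded ring_hom_fun_def] fls_map_add
      ring_hom_fun_zero[unfolded ring_hom_fun_def] intro!: fls_eqI)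

lemma ring_hom_fun_fls_const: "ring_hom_fun (fls_const :: 'b::comm_ring_1 \<Rightarrow> 'b fls)"
  by (simp add: ring_hom_fun_def fls_plus_const)

text \<open>A series in the spectral parameter \<open>z\<close> with finitely many positive powers is encoded as a
  Laurent series in \<open>z\<^sup>-\<^sup>1\<close>: index \<open>k\<close> holds the coefficient of \<open>z\<^sup>-\<^sup>k\<close>, so \<open>fls_X_inv\<close> plays
  the role of \<open>z\<close>.\<close>

abbreviation zvar :: "'r::comm_ring_1 fls" where "zvar \<equiv> fls_X_inv"

lemma zvar_mult_nth: "(zvar * x) $$ k = x $$ (k + 1)"
  by (simp add: fls_X_inv_times_conv_shift)

lemma fls_map_zvar_mult: "derivation d \<Longrightarrow> fls_map d (zvar * x) = zvar * fls_map d x"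
  by (rule fls_eqI) (simp add: derivation_zero zvar_mult_nth)

lemma fls_map_derivation_const: "derivation d \<Longrightarrow> fls_map d (fls_const c) = fls_const (d c)"
  by (simp add: fls_map_const derivation_zero)

definition fls_even :: "'r::comm_ring_1 fls \<Rightarrow> bool" where
  "fls_even x \<longleftrightarrow> (\<forall>k. odd k \<longrightarrow> x $$ k = 0)"

lemma fls_even_add: "fls_even x \<Longrightarrow> fls_even y \<Longrightarrow> fls_even (x + y)"
  by (simp add: fls_even_def)
lemma fls_even_diff: "fls_even x \<Longrightarrow> fls_even y \<Longrightarrow> fls_even (x - y)"
  by (simp add: fls_even_def)
lemma fls_even_const: "fls_even (fls_const c)"
  by (auto simp: fls_even_def)
lemma fls_even_numeral: "fls_even (numeral n)"
  by (metis fls_even_const fls_const_numeral)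
lemma fls_even_map: "derivation d \<Longrightarrow> fls_even x \<Longrightarrow> fls_even (fls_map d x)"
  by (simp add: fls_even_def derivation_zero)
lemma fls_even_zvar_zvar_mult: "fls_even x \<Longrightarrow> fls_even (zvar * (zvar * x))"
  by (simp add: fls_even_def zvar_mult_nth add.assoc)

lemma fls_even_mult:
  assumes "fls_even x" "fls_even y" shows "fls_even (x * y)"
  unfolding fls_even_def
proof (intro allI impI)
  fix k :: int assume "odd k"
  then have "x $$ i * y $$ (k - i) = 0" for i
    using assms by (cases "odd i") (auto simp: fls_even_def)
  then show "(x * y) $$ k = 0"
    by (simp add: fls_times_nth(2))
qed

lemma fls_compose_power_2_nth: "fls_compose_power x 2 $$ k = (if even k then x $$ (k div 2) else 0)"
  by (simp add: fls_nth_compose_power)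

lemma fls_compose_power_2_numeral: "fls_compose_power (numeral n :: 'r::comm_ring_1 fls) 2 = numeral n"
  by (metis fls_compose_power_const_left fls_const_numeral zero_less_numeral)

lemma fls_compose_power_2_zvar: "fls_compose_power zvar 2 = zvar * zvar"
  by (rule fls_eqI) (simp add: fls_compose_power_2_nth zvar_mult_nth)

lemma fls_compose_power_2_map:
  "derivation d \<Longrightarrow> fls_compose_power (fls_map d x) 2 = fls_map d (fls_compose_power x 2)"
  by (rule fls_eqI) (simp add: fls_compose_power_2_nth derivation_zero)

lemma fls_compose_power_2_inj: "fls_compose_power x 2 = fls_compose_power y 2 \<Longrightarrow> x = y"
proof (rule fls_eqI)
  fix n assume "fls_compose_power x 2 = fls_compose_power y 2"
  then have "fls_compose_power x 2 $$ (2 * n) = fls_compose_power y 2 $$ (2 * n)" by simp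
  then show "x $$ n = y $$ n" by (simp add: fls_compose_power_2_nth)
qed

lemma fls_compose_power_2_mult:
  fixes x y :: "'r::comm_ring_1 fls"
  shows "fls_compose_power (x * y) 2 = fls_compose_power x 2 * fls_compose_power y 2"
proof (rule fls_eqI)
  fix n
  define a where "a = fls_subdegree x"
  define b where "b = fls_subdegree y"
  let ?x2 = "fls_compose_power x 2" and ?y2 = "fls_compose_power y 2"
  have "(?x2 * ?y2) $$ n = (\<Sum>i=2*a..n-2*b. ?x2 $$ i * ?y2 $$ (n - i))"
    by (rule fls_times_nth_bounded) (auto simp: fls_compose_power_2_nth a_def b_def)
  also have "\<dots> = (\<Sum>i\<in>(\<lambda>j. 2 * j) ` {a..n div 2 - b}. ?x2 $$ i * ?y2 $$ (n - i))"
    if "even n"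
  proof (rule sum.mono_neutral_right)
    show "(\<lambda>j. 2 * j) ` {a..n div 2 - b} \<subseteq> {2 * a..n - 2 * b}" using that by auto
    show "\<forall>i\<in>{2 * a..n - 2 * b} - (\<lambda>j. 2 * j) ` {a..n div 2 - b}. ?x2 $$ i * ?y2 $$ (n - i) = 0"
    proof
      fix i assume i: "i \<in> {2 * a..n - 2 * b} - (\<lambda>j. 2 * j) ` {a..n div 2 - b}"
      have "odd i"
      proof
        assume "even i"
        then have "i = 2 * (i div 2)" by simp
        moreover have "i div 2 \<in> {a..n div 2 - b}" using i that by auto
        ultimately show False using i by blast
      qed
      then show "?x2 $$ i * ?y2 $$ (n - i) = 0" by (simp add: fls_compose_power_2_nth)
    qed
  qed simp
  also have "\<dots> = (\<Sum>j=a..n div 2 - b. x $$ j * y $$ (n div 2 - j))" if "even n"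
    using that by (subst sum.reindex) (auto simp: inj_on_def fls_compose_power_2_nth intro!: sum.cong)
  also have "\<dots> = (x * y) $$ (n div 2)"
    by (simp add: fls_times_nth(2) a_def b_def)
  finally have "even n \<Longrightarrow> (?x2 * ?y2) $$ n = (x * y) $$ (n div 2)" .
  moreover have "odd n \<Longrightarrow> (?x2 * ?y2) $$ n = 0"
    by (subst fls_times_nth(2)) (auto intro!: sum.neutral simp: fls_compose_power_2_nth)
  ultimately show "fls_compose_power (x * y) 2 $$ n = (?x2 * ?y2) $$ n"
    by (cases "even n") (auto simp: fls_compose_power_2_nth)
qed

definition fls_halve :: "'r::comm_ring_1 fls \<Rightarrow> 'r fls" where
  "fls_halve x = Abs_fls (\<lambda>k. x $$ (2 * k))"

lemma fls_halve_nth: "fls_halve x $$ k = x $$ (2 * k)"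
  unfolding fls_halve_def
  by (rule nth_Abs_fls_lower_bound[where N="min (fls_subdegree x) 0"]) auto

lemma fls_compose_power_halve: "fls_even x \<Longrightarrow> fls_compose_power (fls_halve x) 2 = x"
  by (rule fls_eqI) (auto simp: fls_compose_power_2_nth fls_halve_nth fls_even_def)

section \<open>The wave equation and the Wronskian\<close>

text \<open>If \<open>h\<close> is the series part of \<open>h e\<^sup>s\<^sup>x\<^sup>z\<close>, then \<open>twisted_deriv d s h\<close> is the series part of its
  \<open>x\<close>-derivative.\<close>

definition twisted_deriv :: "('r::comm_ring_1 \<Rightarrow> 'r) \<Rightarrow> 'r \<Rightarrow> 'r fls \<Rightarrow> 'r fls" where
  "twisted_deriv d s h = fls_map d h + fls_const s * (zvar * h)"

definition schroedinger_eq :: "('r::comm_ring_1 \<Rightarrow> 'r) \<Rightarrow> 'r \<Rightarrow> 'r \<Rightarrow> 'r fls \<Rightarrow> bool" where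
  "schroedinger_eq d U s f \<longleftrightarrow>
     twisted_deriv d s (twisted_deriv d s f) + fls_const (2 * U) * f = zvar * (zvar * f)"

definition vanishing_pairings :: "('r::comm_ring_1 \<Rightarrow> 'r) \<Rightarrow> 'r fls \<Rightarrow> int \<Rightarrow> 'r fls set" where
  "vanishing_pairings d g m = {h. \<forall>j. ((twisted_deriv d 1 ^^ j) h * g) $$ m = 0}"

lemma fls_map_derivation_add: "derivation d \<Longrightarrow> fls_map d (a + b) = fls_map d a + fls_map d b"
  by (rule fls_map_add) (simp_all add: derivation_add derivation_zero)

lemma twisted_deriv_add:
  "derivation d \<Longrightarrow> twisted_deriv d s (a + b) = twisted_deriv d s a + twisted_deriv d s b"
  by (simp add: twisted_deriv_def fls_map_derivation_add algebra_simps)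

lemma twisted_deriv_power_add:
  "derivation d \<Longrightarrow> (twisted_deriv d s ^^ j) (a + b) = (twisted_deriv d s ^^ j) a + (twisted_deriv d s ^^ j) b"
  by (induction j) (simp_all add: twisted_deriv_add)

lemma twisted_deriv_const_mult: "derivation d \<Longrightarrow>
    twisted_deriv d s (fls_const c * h) = fls_const (d c) * h + fls_const c * twisted_deriv d s h"
  by (simp add: twisted_deriv_def fls_map_mult_derivation fls_map_derivation_const algebra_simps)

lemma twisted_deriv_power_zvar_mult:
  "derivation d \<Longrightarrow> (twisted_deriv d s ^^ j) (zvar * h) = zvar * (twisted_deriv d s ^^ j) h"
  by (induction j) (simp_all add: twisted_deriv_def fls_map_zvar_mult algebra_simps)

lemma schroedinger_eq_iff:
  assumes d: "derivation d" and s: "s = 1 \<or> s = -1"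
  shows "schroedinger_eq d U s f \<longleftrightarrow>
    fls_map d (fls_map d f) = - (2 * (fls_const s * (zvar * fls_map d f)) + fls_const (2 * U) * f)"
proof -
  let ?S = "fls_const s" and ?f' = "fls_map d f"
  have "d 1 = 0"
    using derivation_mult[OF d, of 1 1] by simp
  then have "d s = 0"
    using s derivation_uminus[OF d, of 1] by auto
  then have "fls_map d (?S * (zvar * f)) = ?S * (zvar * ?f')"
    by (simp add: fls_map_mult_derivation[OF d, of ?S] fls_map_derivation_const[OF d]
        fls_map_zvar_mult[OF d])
  then have "twisted_deriv d s (twisted_deriv d s f) =
      fls_map d ?f' + ?S * (zvar * ?f') + ?S * (zvar * ?f') + ?S * (zvar * (?S * (zvar * f)))"
    by (simp add: twisted_deriv_def fls_map_derivation_add[OF d] distrib_left)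
  also have "?S * (zvar * (?S * (zvar * f))) = (?S * ?S) * (zvar * (zvar * f))"
    by (simp only: mult_ac)
  also have "?S * ?S = 1"
    using s by auto
  finally show ?thesis
    unfolding schroedinger_eq_def by (simp add: eq_neg_iff_add_eq_0 algebra_simps)
qed

lemma vanishing_pairings_twisted_deriv:
  assumes "h \<in> vanishing_pairings d g m" shows "twisted_deriv d 1 h \<in> vanishing_pairings d g m"
proof -
  have "(twisted_deriv d 1 ^^ j) (twisted_deriv d 1 h) = (twisted_deriv d 1 ^^ Suc j) h" for j
    by (simp add: funpow_swap1)
  then show ?thesis using assms unfolding vanishing_pairings_def by (simp del: funpow.simps)
qed

lemma vanishing_pairings_const_mult:
  assumes d: "derivation d"
  shows "h \<in> vanishing_pairings d g m \<Longrightarrow> fls_const c * h \<in> vanishing_pairings d g m"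
proof -
  have "\<forall>c h. h \<in> vanishing_pairings d g m \<longrightarrow> ((twisted_deriv d 1 ^^ j) (fls_const c * h) * g) $$ m = 0"
    for j
  proof (induction j)
    case 0
    show ?case by (auto simp: vanishing_pairings_def mult.assoc dest: spec[of _ 0])
  next
    case (Suc j)
    show ?case
    proof (intro allI impI)
      fix c h assume h: "h \<in> vanishing_pairings d g m"
      have "(twisted_deriv d 1 ^^ Suc j) (fls_const c * h) =
          (twisted_deriv d 1 ^^ j) (fls_const (d c) * h) + (twisted_deriv d 1 ^^ j) (fls_const c * twisted_deriv d 1 h)"
        by (simp add: funpow_swap1 twisted_deriv_const_mult d twisted_deriv_power_add)
      then show "((twisted_deriv d 1 ^^ Suc j) (fls_const c * h) * g) $$ m = 0"
        using Suc.IH h vanishing_pairings_twisted_deriv[OF h] by (simp add: distrib_right)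
    qed
  qed
  then show "h \<in> vanishing_pairings d g m \<Longrightarrow> fls_const c * h \<in> vanishing_pairings d g m"
    by (simp add: vanishing_pairings_def)
qed

text \<open>The wave equation writes \<open>z\<^sup>2f\<close> through twisted derivatives of \<open>f\<close>, so vanishing of the
  pairings at index \<open>m\<close> propagates to index \<open>m + 2\<close>.\<close>

lemma vanishing_pairings_add_2:
  assumes d: "derivation d" and f_eq: "schroedinger_eq d U 1 f"
    and f: "f \<in> vanishing_pairings d g m"
  shows "f \<in> vanishing_pairings d g (m + 2)"
  unfolding vanishing_pairings_def
proof (intro CollectI allI)
  fix j
  have zz: "zvar * (zvar * f) = twisted_deriv d 1 (twisted_deriv d 1 f) + fls_const (2 * U) * f"
    using f_eq by (simp add: schroedinger_eq_def)
  have "((twisted_deriv d 1 ^^ j) f * g) $$ (m + 2) = (zvar * (zvar * ((twisted_deriv d 1 ^^ j) f * g))) $$ m"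
    by (simp add: zvar_mult_nth add.assoc)
  also have "zvar * (zvar * ((twisted_deriv d 1 ^^ j) f * g)) = (twisted_deriv d 1 ^^ j) (zvar * (zvar * f)) * g"
    by (simp add: twisted_deriv_power_zvar_mult[OF d] mult.assoc)
  also have "\<dots> = (twisted_deriv d 1 ^^ j) (twisted_deriv d 1 (twisted_deriv d 1 f)) * g
      + (twisted_deriv d 1 ^^ j) (fls_const (2 * U) * f) * g"
    unfolding zz by (simp only: twisted_deriv_power_add[OF d] distrib_right)
  finally show "((twisted_deriv d 1 ^^ j) f * g) $$ (m + 2) = 0"
    using vanishing_pairings_twisted_deriv[OF vanishing_pairings_twisted_deriv[OF f]]
      vanishing_pairings_const_mult[OF d f, of "2 * U"]
    unfolding vanishing_pairings_def by simp
qed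

lemma vanishing_pairings_odd:
  assumes d: "derivation d" and f_eq: "schroedinger_eq d U 1 f"
    and f: "f \<in> vanishing_pairings d g 1" and "odd k" "k > 0"
  shows "f \<in> vanishing_pairings d g k"
proof -
  define n where "n = nat (k div 2)"
  have k: "k = 2 * int n + 1"
    using \<open>odd k\<close> \<open>k > 0\<close> by (simp add: n_def)
  have "f \<in> vanishing_pairings d g (2 * int n + 1)"
  proof (induction n)
    case (Suc n)
    then show ?case using vanishing_pairings_add_2[OF d f_eq Suc] by (simp add: algebra_simps)
  qed (use f in simp)
  then show ?thesis by (simp add: k)
qed

lemma half_squared_times_four: "2 * H = (1::'r::comm_ring_1) \<Longrightarrow> (H * H) * (4 * x) = x"
proof -
  assume H: "2 * H = 1"
  have "(H * H) * (4 * x) = ((2 * H) * (2 * H)) * x"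
    by (simp add: mult_ac)
  then show ?thesis using H by simp
qed

lemma wave_product_even:
  assumes d: "derivation d" and f_eq: "schroedinger_eq d U 1 f"
    and f_nneg: "\<forall>k<0. f $$ k = 0" and g_nneg: "\<forall>k<0. g $$ k = 0"
    and dual: "f \<in> vanishing_pairings d g 1"
  shows "fls_even (f * g)"
  unfolding fls_even_def
proof (intro allI impI)
  fix k :: int assume k: "odd k"
  show "(f * g) $$ k = 0"
  proof (cases "k < 0")
    case True then show ?thesis using fls_times_nth_neg f_nneg g_nneg by blast
  next
    case False
    then have "k > 0" using k by (cases "k = 0") auto
    then have "((twisted_deriv d 1 ^^ 0) f * g) $$ k = 0"
      using vanishing_pairings_odd[OF d f_eq dual k] unfolding vanishing_pairings_def by blast
    then show ?thesis by simp
  qed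
qed

text \<open>With \<open>H = 1/2\<close>, the equation \<open>b_operator d H U \<lambda> b = -2\<lambda>\<close> is the defining equation
  \<open>b b\<^sub>x\<^sub>x - b\<^sub>x\<^sup>2/2 - 2(\<lambda> - 2u)b\<^sup>2 = -2\<lambda>\<close> of \<open>b\<close>.\<close>

definition b_operator :: "('r::comm_ring_1 \<Rightarrow> 'r) \<Rightarrow> 'r \<Rightarrow> 'r \<Rightarrow> 'r fls \<Rightarrow> 'r fls \<Rightarrow> 'r fls" where
  "b_operator d H U lam B = B * fls_map d (fls_map d B) - fls_const H * (fls_map d B * fls_map d B)
     - 2 * ((lam - fls_const (2 * U)) * (B * B))"

text \<open>The series part of \<open>\<psi> \<partial>\<^sub>x\<psi>\<^sup>* - \<psi>\<^sup>* \<partial>\<^sub>x\<psi>\<close> for \<open>\<psi> = f e\<^sup>x\<^sup>z\<close>, \<open>\<psi>\<^sup>* = g e\<^sup>-\<^sup>x\<^sup>z\<close>.\<close>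

definition wronskian :: "('r::comm_ring_1 \<Rightarrow> 'r) \<Rightarrow> 'r fls \<Rightarrow> 'r fls \<Rightarrow> 'r fls" where
  "wronskian d f g = f * fls_map d g - fls_map d f * g - 2 * (zvar * (f * g))"

lemma b_operator_wave_product:
  fixes f g :: "'r::comm_ring_1 fls"
  assumes d: "derivation d" and H: "2 * H = (1::'r)"
    and f_eq: "schroedinger_eq d U 1 f" and g_eq: "schroedinger_eq d U (-1) g"
  shows "b_operator d H U (zvar * zvar) (f * g) = - (fls_const H * (wronskian d f g * wronskian d f g))"
proof -
  define R f' g' c h where "R = f * g" and "f' = fls_map d f" and "g' = fls_map d g"
    and "c = fls_const (2 * U)" and "h = fls_const H"
  have h: "2 * h = 1"
    unfolding h_def by (metis H fls_const_1 fls_const_mult_const fls_const_numeral)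
  have R': "fls_map d R = f' * g + f * g'"
    unfolding R_def f'_def g'_def by (rule fls_map_mult_derivation[OF d])
  have f'': "fls_map d f' = - (2 * (zvar * f')) - c * f"
    using f_eq unfolding f'_def c_def by (simp add: schroedinger_eq_iff[OF d])
  have g'': "fls_map d g' = 2 * (zvar * g') - c * g"
    using g_eq unfolding g'_def c_def by (simp add: schroedinger_eq_iff[OF d])
  have R'': "fls_map d (fls_map d R) = fls_map d f' * g + 2 * (f' * g') + f * fls_map d g'"
    unfolding R' by (simp add: fls_map_derivation_add[OF d] fls_map_mult_derivation[OF d]
        f'_def g'_def algebra_simps)
  have "b_operator d H U (zvar * zvar) R =
      h * (2 * R * fls_map d (fls_map d R) - fls_map d R * fls_map d R
        - 4 * (zvar * (zvar * (R * R))) + 4 * c * (R * R))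
      + (1 - 2 * h) * (R * fls_map d (fls_map d R) - 2 * ((zvar * zvar - c) * (R * R)))"
    unfolding b_operator_def h_def c_def by (simp add: algebra_simps)
  also have "\<dots> = h * (2 * R * ((- (2 * (zvar * f')) - c * f) * g + 2 * (f' * g') + f * (2 * (zvar * g') - c * g))
        - (f' * g + f * g') * (f' * g + f * g') - 4 * (zvar * (zvar * (R * R))) + 4 * c * (R * R))"
    unfolding h R'' unfolding R' f'' g'' by simp
  also have "\<dots> = - (h * (wronskian d f g * wronskian d f g))"
    unfolding wronskian_def R_def f'_def[symmetric] g'_def[symmetric] by (simp add: algebra_simps)
  finally show ?thesis unfolding R_def h_def .
qed

lemma fls_even_b_operator:
  "derivation d \<Longrightarrow> fls_even lam \<Longrightarrow> fls_even R \<Longrightarrow> fls_even (b_operator d H U lam R)"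
  unfolding b_operator_def
  by (intro fls_even_diff fls_even_mult fls_even_map fls_even_const fls_even_numeral; simp)

lemma fls_even_wronskian_add:
  fixes f g :: "'r::comm_ring_1 fls"
  assumes d: "derivation d"
    and f0: "f $$ 0 = 1" and f_nneg: "\<forall>k<0. f $$ k = 0"
    and g0: "g $$ 0 = 1" and g_nneg: "\<forall>k<0. g $$ k = 0"
    and f_eq: "schroedinger_eq d U 1 f" and dual: "f \<in> vanishing_pairings d g 1"
  shows "fls_even (wronskian d f g + 2 * zvar)"
  unfolding fls_even_def
proof (intro allI impI)
  fix k :: int assume k: "odd k"
  define R where "R = f * g"
  have "fls_map d R $$ k = 0"
    using wave_product_even[OF d f_eq f_nneg g_nneg dual] k d
    by (simp add: R_def fls_even_def derivation_zero)
  moreover have "(twisted_deriv d 1 f * g) $$ k = (if k = -1 then 1 else 0)"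
  proof (cases "k > 0")
    case True
    then have "((twisted_deriv d 1 ^^ 1) f * g) $$ k = 0"
      using vanishing_pairings_odd[OF d f_eq dual k True] unfolding vanishing_pairings_def by blast
    then show ?thesis using True by simp
  next
    case False
    then have "k < 0" using k by (cases "k = 0") auto
    moreover have "\<forall>k<0. fls_map d f $$ k = 0" using f_nneg d by (simp add: derivation_zero)
    ultimately have "(fls_map d f * g) $$ k = 0" using fls_times_nth_neg g_nneg by blast
    moreover have "R $$ (k + 1) = (if k = -1 then 1 else 0)"
      using \<open>k < 0\<close> fls_times_nth_neg[OF f_nneg g_nneg] fls_times_nth_nonneg[OF f_nneg g_nneg, of 0]
        f0 g0 by (auto simp: R_def)
    ultimately show ?thesis
      unfolding twisted_deriv_def by (simp add: R_def distrib_right mult.assoc zvar_mult_nth)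
  qed
  moreover have "wronskian d f g + 2 * zvar = fls_map d R - 2 * (twisted_deriv d 1 f * g) + 2 * zvar"
    unfolding wronskian_def twisted_deriv_def R_def
    by (simp add: fls_map_mult_derivation[OF d] algebra_simps)
  ultimately show "(wronskian d f g + 2 * zvar) $$ k = 0"
    by simp
qed

lemma fls_even_zvar_mult_imp_zero:
  fixes E :: "'r::comm_ring_1 fls"
  assumes H: "2 * H = (1::'r)" and "fls_even E" and "fls_even (4 * (zvar * E))"
  shows "E = 0"
proof (rule fls_eqI)
  fix n
  show "E $$ n = 0 $$ n"
  proof (cases "odd n")
    case True then show ?thesis using assms(2) by (simp add: fls_even_def)
  next
    case False
    then have "(4 * (zvar * E)) $$ (n - 1) = 0"
      using assms(3) unfolding fls_even_def by simp
    then have "4 * E $$ n = 0"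
      by (simp add: zvar_mult_nth)
    then show ?thesis using half_squared_times_four[OF H, of "E $$ n"] by simp
  qed
qed

text \<open>Both \<open>E = W + 2z\<close> and \<open>W\<^sup>2 = -2 b_operator d H U (z\<^sup>2) (f g)\<close> are even, hence so is
  \<open>4zE = E\<^sup>2 + 4z\<^sup>2 - W\<^sup>2\<close>; an even series whose product with \<open>z\<close> is even vanishes.\<close>

lemma wronskian_eq:
  fixes f g :: "'r::comm_ring_1 fls"
  assumes d: "derivation d" and H: "2 * H = (1::'r)"
    and f0: "f $$ 0 = 1" and f_nneg: "\<forall>k<0. f $$ k = 0"
    and g0: "g $$ 0 = 1" and g_nneg: "\<forall>k<0. g $$ k = 0"
    and f_eq: "schroedinger_eq d U 1 f" and g_eq: "schroedinger_eq d U (-1) g"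
    and dual: "f \<in> vanishing_pairings d g 1"
  shows "wronskian d f g = - (2 * zvar)"
proof -
  define R W E where "R = f * g" and "W = wronskian d f g" and "E = W + 2 * zvar"
  have E_even: "fls_even E"
    unfolding E_def W_def by (rule fls_even_wronskian_add[OF d f0 f_nneg g0 g_nneg f_eq dual])
  have h: "2 * fls_const H = (1 :: 'r fls)"
    by (metis H fls_const_1 fls_const_mult_const fls_const_numeral)
  have "W * W = - (2 * b_operator d H U (zvar * zvar) R)"
    unfolding R_def W_def b_operator_wave_product[OF d H f_eq g_eq]
    by (simp add: mult.assoc[symmetric] h)
  then have zE: "4 * (zvar * E) = E * E + 4 * (zvar * (zvar * 1)) + 2 * b_operator d H U (zvar * zvar) R"
    unfolding E_def by (simp add: algebra_simps)
  have zz_even: "fls_even (zvar * (zvar * 1))"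
    by (rule fls_even_zvar_zvar_mult[OF fls_even_const[of 1, unfolded fls_const_1]])
  moreover have "fls_even (b_operator d H U (zvar * zvar) R)"
    using fls_even_b_operator[OF d _ wave_product_even[OF d f_eq f_nneg g_nneg dual]] zz_even
    by (simp add: R_def)
  ultimately have "fls_even (4 * (zvar * E))"
    unfolding zE using E_even
    by (intro fls_even_add fls_even_mult[OF fls_even_numeral]) (auto intro: fls_even_mult)
  then have "E = 0"
    by (rule fls_even_zvar_mult_imp_zero[OF H E_even])
  then show ?thesis unfolding E_def W_def by (simp add: eq_neg_iff_add_eq_0)
qed
section \<open>Uniqueness of \<open>b\<close>\<close>

lemma fls_compose_power_2_b_operator:
  "derivation d \<Longrightarrow> fls_compose_power (b_operator d H U lam B) 2 =
     b_operator d H U (fls_compose_power lam 2) (fls_compose_power B 2)"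
  by (simp add: b_operator_def fls_compose_power_2_mult fls_compose_power_2_map
      fls_compose_power_2_numeral)

lemma b_operator_eq_halve:
  assumes d: "derivation d" and R_even: "fls_even R"
    and R_eq: "b_operator d H U (zvar * zvar) R = - (2 * (zvar * zvar))"
  shows "b_operator d H U zvar (fls_halve R) = - (2 * zvar)"
proof (rule fls_compose_power_2_inj)
  show "fls_compose_power (b_operator d H U zvar (fls_halve R)) 2 = fls_compose_power (- (2 * zvar)) 2"
    using R_eq by (simp add: fls_compose_power_2_b_operator[OF d] fls_compose_power_halve[OF R_even]
        fls_compose_power_2_zvar fls_compose_power_2_mult fls_compose_power_2_numeral)
qed

text \<open>The coefficient of \<open>\<lambda>\<^sup>-\<^sup>k\<close> of the equation for \<open>b\<close> determines \<open>4 b\<^sub>k\<^sub>+\<^sub>1\<close> from \<open>b\<^sub>0, \<dots>, b\<^sub>k\<close>.\<close>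

definition b_rec :: "('r::comm_ring_1 \<Rightarrow> 'r) \<Rightarrow> 'r \<Rightarrow> 'r \<Rightarrow> nat \<Rightarrow> (nat \<Rightarrow> 'r) \<Rightarrow> 'r" where
  "b_rec d H U k b = (\<Sum>i\<le>k. b i * d (d (b (k - i)))) - H * (\<Sum>i\<le>k. d (b i) * d (b (k - i)))
     + 4 * U * (\<Sum>i\<le>k. b i * b (k - i)) - 2 * (\<Sum>i\<in>{1..k}. b i * b (Suc k - i))"

lemma b_rec_cong: "(\<And>j. j \<le> k \<Longrightarrow> b j = b' j) \<Longrightarrow> b_rec d H U k b = b_rec d H U k b'"
  unfolding b_rec_def by (intro arg_cong2[where f=minus] arg_cong2[where f=plus]
      arg_cong2[where f=times] sum.cong refl) auto

lemma b_operator_eq_coeff: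
  fixes B :: "'r::comm_ring_1 fls"
  assumes d: "derivation d" and B_eq: "b_operator d H U zvar B = - (2 * zvar)"
    and B0: "B $$ 0 = 1" and B_nneg: "\<forall>k<0. B $$ k = 0"
  shows "4 * B $$ int (Suc k) = b_rec d H U k (\<lambda>j. B $$ int j)"
proof -
  define b where "b = (\<lambda>j. B $$ int j)"
  have B'_nneg: "\<forall>k<0. fls_map d B $$ k = 0" and B''_nneg: "\<forall>k<0. fls_map d (fls_map d B) $$ k = 0"
    using B_nneg d by (simp_all add: derivation_zero)
  have "(B * B) $$ int (Suc k) = (\<Sum>i\<le>Suc k. b i * b (Suc k - i))"
    unfolding b_def by (rule fls_times_nth_nonneg[OF B_nneg B_nneg])
  also have "{..Suc k} = insert 0 (insert (Suc k) {1..k})" by auto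
  finally have BB_Suc: "(B * B) $$ (int k + 1) = 2 * b (Suc k) + (\<Sum>i\<in>{1..k}. b i * b (Suc k - i))"
    using B0 by (simp add: b_def algebra_simps)
  have "(b_operator d H U zvar B) $$ int k = (- (2 * zvar)) $$ int k"
    using B_eq by simp
  then have "(B * fls_map d (fls_map d B)) $$ int k - H * (fls_map d B * fls_map d B) $$ int k
      - 2 * ((B * B) $$ (int k + 1) - 2 * U * (B * B) $$ int k) = 0"
    by (simp add: b_operator_def left_diff_distrib zvar_mult_nth mult.assoc del: fls_const_mult_const)
  then show ?thesis
    unfolding BB_Suc fls_times_nth_nonneg[OF B_nneg B''_nneg] fls_times_nth_nonneg[OF B'_nneg B'_nneg]
      fls_times_nth_nonneg[OF B_nneg B_nneg]
    by (simp add: b_rec_def b_def d derivation_zero algebra_simps)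
qed

lemma b_operator_eq_unique:
  fixes B B' :: "'r::comm_ring_1 fls"
  assumes d: "derivation d" and H: "2 * H = 1"
    and B_eq: "b_operator d H U zvar B = - (2 * zvar)" and B0: "B $$ 0 = 1" and B_nneg: "\<forall>k<0. B $$ k = 0"
    and B'_eq: "b_operator d H U zvar B' = - (2 * zvar)" and B'0: "B' $$ 0 = 1"
    and B'_nneg: "\<forall>k<0. B' $$ k = 0"
  shows "B = B'"
proof -
  have "\<forall>j\<le>n. B $$ int j = B' $$ int j" for n
  proof (induction n)
    case (Suc n)
    have "4 * B $$ int (Suc n) = 4 * B' $$ int (Suc n)"
      unfolding b_operator_eq_coeff[OF d B_eq B0 B_nneg] b_operator_eq_coeff[OF d B'_eq B'0 B'_nneg]
      using Suc.IH by (intro b_rec_cong) simp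
    then have "B $$ int (Suc n) = B' $$ int (Suc n)"
      by (metis half_squared_times_four[OF H])
    then show ?case using Suc.IH le_Suc_eq by auto
  qed (simp add: B0 B'0)
  then show ?thesis
    using B_nneg B'_nneg by (intro fls_eqI) (metis linorder_not_le nat_0_le order_refl)
qed

definition differential_subring :: "('r::comm_ring_1 \<Rightarrow> 'r) \<Rightarrow> 'r set \<Rightarrow> bool" where
  "differential_subring d S \<longleftrightarrow> 0 \<in> S \<and> 1 \<in> S \<and>
     (\<forall>x\<in>S. \<forall>y\<in>S. x + y \<in> S \<and> x * y \<in> S) \<and> (\<forall>x\<in>S. - x \<in> S \<and> d x \<in> S)"

lemma differential_subring_sum:
  "differential_subring d S \<Longrightarrow> (\<And>i. i \<in> I \<Longrightarrow> f i \<in> S) \<Longrightarrow> sum f I \<in> S"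
  by (induction I rule: infinite_finite_induct) (auto simp: differential_subring_def)

lemma differential_subring_numeral: "differential_subring d S \<Longrightarrow> numeral n \<in> S"
proof -
  assume S: "differential_subring d S"
  have "of_nat n \<in> S" for n
    using S by (induction n) (auto simp: differential_subring_def)
  from this[of "numeral n"] show ?thesis by simp
qed

lemma b_operator_eq_coeff_in:
  fixes B :: "'r::comm_ring_1 fls"
  assumes d: "derivation d" and H: "2 * H = 1" and S: "differential_subring d S"
    and HS: "H \<in> S" and US: "U \<in> S"
    and B_eq: "b_operator d H U zvar B = - (2 * zvar)" and B0: "B $$ 0 = 1" and B_nneg: "\<forall>k<0. B $$ k = 0"
  shows "B $$ k \<in> S"
proof -
  have add: "x + y \<in> S" and mult: "x * y \<in> S" if "x \<in> S" "y \<in> S" for x y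
    using S that by (auto simp: differential_subring_def)
  have diff: "x - y \<in> S" if "x \<in> S" "y \<in> S" for x y
    using add[of x "- y"] S that by (simp add: differential_subring_def)
  have dS: "d x \<in> S" if "x \<in> S" for x
    using S that by (simp add: differential_subring_def)
  have sumS: "sum f I \<in> S" if "\<And>i. i \<in> I \<Longrightarrow> f i \<in> S" for f and I :: "nat set"
    using differential_subring_sum[OF S] that by blast
  have "\<forall>j\<le>m. B $$ int j \<in> S" for m
  proof (induction m)
    case 0 then show ?case using B0 S by (simp add: differential_subring_def)
  next
    case (Suc m)
    then have b: "B $$ int j \<in> S" if "j \<le> m" for j using that by simp
    have "b_rec d H U m (\<lambda>j. B $$ int j) \<in> S"
      unfolding b_rec_def
      by (intro diff add mult sumS dS HS US b differential_subring_numeral[OF S]) auto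
    then have "(H * H) * (4 * B $$ int (Suc m)) \<in> S"
      unfolding b_operator_eq_coeff[OF d B_eq B0 B_nneg] by (intro mult HS)
    then have "B $$ int (Suc m) \<in> S" by (simp add: half_squared_times_four[OF H])
    then show ?case using Suc.IH le_Suc_eq by auto
  qed
  then have B_nonneg_in: "B $$ int j \<in> S" for j by blast
  show ?thesis
  proof (cases "k < 0")
    case True then show ?thesis using B_nneg S by (simp add: differential_subring_def)
  next
    case False then show ?thesis using B_nonneg_in[of "nat k"] by simp
  qed
qed

section \<open>Representing the given series\<close>

definition lser_rep :: "'a::comm_ring_1 lser \<Rightarrow> 'a tser fls \<Rightarrow> bool" where
  "lser_rep F x \<longleftrightarrow> F = (\<lambda>i. tser_nth (x $$ (- i)))"

lemma lser_rep_nth: "lser_rep F x \<Longrightarrow> x $$ k = Abs_tser (F (- k))"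
  by (simp add: lser_rep_def)

lemma lser_rep_unique: "lser_rep F x \<Longrightarrow> lser_rep F y \<Longrightarrow> x = y"
  by (rule fls_eqI) (simp add: lser_rep_nth)

lemma lser_rep_eq_iff:
  assumes F: "lser_rep F x" and G: "lser_rep G y"
  shows "F = G \<longleftrightarrow> x = y"
  using lser_rep_unique[OF F] F G by (auto simp: lser_rep_def)

lemma lser_rep_lsub: "lser_rep F x \<Longrightarrow> lser_rep G y \<Longrightarrow> lser_rep (lsub F G) (x - y)"
  by (simp add: lser_rep_def lsub_def ser_sub_def fun_eq_iff)

lemma lser_rep_lscale: "lser_rep F x \<Longrightarrow> lser_rep (lscale c F) (fls_const (tser_const c) * x)"
  unfolding lser_rep_def by clarify (simp add: lscale_def ser_scale_eq fun_eq_iff)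

lemma lser_rep_lconst: "lser_rep (lconst f) (fls_const (Abs_tser f))"
  by (auto simp: lser_rep_def lconst_def fun_eq_iff ser_zero_def)

lemma lser_rep_lvar: "lser_rep lvar zvar"
  by (auto simp: lser_rep_def lvar_def fun_eq_iff ser_zero_def)

lemma lser_rep_ldx: "derivation dx \<Longrightarrow> lser_rep F x \<Longrightarrow> lser_rep (ldx dx F) (fls_map (tser_dx dx) x)"
  by (simp add: lser_rep_def ldx_def ser_dt_0_eq fun_eq_iff derivation_zero derivation_tser_dx
     )

lemma lser_rep_shiftd: "derivation dx \<Longrightarrow> lser_rep F x \<Longrightarrow>
    lser_rep (shiftd dx s F) (twisted_deriv (tser_dx dx) (tser_const s) x)"
  unfolding lser_rep_def twisted_deriv_def
  by clarify (simp add: shiftd_def ser_dt_0_eq ser_scale_eq ser_add_def fun_eq_iff derivation_zero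
      derivation_tser_dx zvar_mult_nth)

lemma lser_rep_shiftd_power: "derivation dx \<Longrightarrow> lser_rep F x \<Longrightarrow>
    lser_rep ((shiftd dx s ^^ n) F) ((twisted_deriv (tser_dx dx) (tser_const s) ^^ n) x)"
  by (induction n) (simp_all add: lser_rep_shiftd)

lemma lser_rep_shift_2: "lser_rep F x \<Longrightarrow> lser_rep (\<lambda>i. F (i - 2)) (zvar * (zvar * x))"
  by (simp add: lser_rep_def zvar_mult_nth fun_eq_iff algebra_simps)

lemma lser_rep_lsq: "lser_rep F x \<Longrightarrow> lser_rep (lsq F) (fls_compose_power x 2)"
proof -
  have "- k div 2 = - (k div 2)" if "even k" for k :: int
    using that by presburger
  then show "lser_rep F x \<Longrightarrow> lser_rep (lsq F) (fls_compose_power x 2)"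
    by (auto simp: lser_rep_def lsq_def fls_compose_power_2_nth fun_eq_iff ser_zero_def)
qed

lemma lser_rep_lmult:
  assumes F: "lser_rep F x" and G: "lser_rep G y"
  shows "lser_rep (lmult F G) (x * y)"
  unfolding lser_rep_def
proof (intro ext)
  fix i M
  define a b where "a = fls_subdegree x" and "b = fls_subdegree y"
  define t where "t = (\<lambda>j. ser_mult (F j) (G (i - j)) M)"
  have F_eq: "F j = tser_nth (x $$ (- j))" and G_eq: "G j = tser_nth (y $$ (- j))" for j
    using F G by (simp_all add: lser_rep_def)
  have t_eq: "t j = tser_nth (x $$ (- j) * y $$ (j - i)) M" for j
    by (simp add: t_def F_eq G_eq tser_nth_mult)
  have "tser_nth ((x * y) $$ (- i)) M = (\<Sum>k=a..- i - b. tser_nth (x $$ k * y $$ (- i - k)) M)"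
    by (simp add: fls_times_nth(2) a_def b_def tser_nth_sum)
  also have "\<dots> = (\<Sum>k=a..- i - b. t (- k))"
  proof (rule sum.cong[OF refl])
    fix k :: int
    have "- k - i = - i - k" by linarith
    then show "tser_nth (x $$ k * y $$ (- i - k)) M = t (- k)" by (simp only: t_eq minus_minus)
  qed
  also have "\<dots> = (\<Sum>j\<in>uminus ` {a..- i - b}. t j)"
    by (subst sum.reindex) (auto simp: inj_on_def)
  also have "\<dots> = (\<Sum>j\<in>{j. F j \<noteq> ser_zero \<and> G (i - j) \<noteq> ser_zero}. t j)"
  proof (rule sum.mono_neutral_right)
    show "{j. F j \<noteq> ser_zero \<and> G (i - j) \<noteq> ser_zero} \<subseteq> uminus ` {a..- i - b}"
    proof
      fix j assume "j \<in> {j. F j \<noteq> ser_zero \<and> G (i - j) \<noteq> ser_zero}"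
      then have "x $$ (- j) \<noteq> 0" "y $$ (j - i) \<noteq> 0"
        by (auto simp: F_eq G_eq tser_nth_eq_zero_iff)
      then have "a \<le> - j" "b \<le> j - i"
        unfolding a_def b_def by (simp_all add: fls_subdegree_leI)
      then have "- j \<in> {a..- i - b}" by simp
      then show "j \<in> uminus ` {a..- i - b}" by (rule rev_image_eqI) simp
    qed
    show "\<forall>j\<in>uminus ` {a..- i - b} - {j. F j \<noteq> ser_zero \<and> G (i - j) \<noteq> ser_zero}. t j = 0"
      by (auto simp: t_def ser_mult_def ser_zero_def)
  qed simp
  finally show "lmult F G i M = tser_nth ((x * y) $$ (- i)) M"
    by (simp add: lmult_def t_def)
qed

definition wave_fls :: "(nat \<Rightarrow> 'a::comm_ring_1 ser) \<Rightarrow> 'a tser fls" where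
  "wave_fls phi = Abs_fls (\<lambda>k. if k = 0 then 1 else if k > 0 then Abs_tser (phi (nat k)) else 0)"

lemma wave_fls_nth: "wave_fls phi $$ k = (if k = 0 then 1 else if k > 0 then Abs_tser (phi (nat k)) else 0)"
  unfolding wave_fls_def by (rule nth_Abs_fls_lower_bound[where N=0]) auto

lemma lser_rep_wser: "lser_rep (wser phi) (wave_fls phi)"
  by (auto simp: lser_rep_def wser_def wave_fls_nth fun_eq_iff)

lemma lser_rep_apply_op_Lop:
  assumes dx: "derivation dx" and F: "lser_rep F x"
  shows "lser_rep (apply_op dx s (Lop u) F)
    ((twisted_deriv (tser_dx dx) (tser_const s) ^^ 2) x + fls_const (2 * Abs_tser u) * x)"
  unfolding lser_rep_def
proof (intro ext)
  fix i M
  define t where "t = (\<lambda>n. ser_mult (Lop u (int n)) ((shiftd dx s ^^ n) F i) M)"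
  have "{n. Lop u (int n) \<noteq> ser_zero} \<subseteq> {0, 2}"
    by (auto simp: Lop_def)
  then have "apply_op dx s (Lop u) F i M = (\<Sum>n\<in>{0, 2}. t n)"
    unfolding apply_op_def t_def[symmetric]
    by (intro sum.mono_neutral_left) (auto simp: t_def ser_mult_def ser_zero_def)
  also have "\<dots> = ser_mult (ser_scale 2 u) (F i) M + (shiftd dx s ^^ 2) F i M"
    by (simp add: t_def Lop_def ser_mult_one)
  finally show "apply_op dx s (Lop u) F i M = tser_nth (((twisted_deriv (tser_dx dx) (tser_const s) ^^ 2) x
      + fls_const (2 * Abs_tser u) * x) $$ (- i)) M"
    using F lser_rep_shiftd_power[OF dx F, where s=s and n=2]
    by (simp add: lser_rep_def ser_scale_eq tser_nth_mult add.commute)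
qed

lemma wave_eqs_schroedinger_eq:
  assumes dx: "derivation dx" and "wave_eqs sc dx u s phi"
  shows "schroedinger_eq (tser_dx dx) (Abs_tser u) (tser_const s) (wave_fls phi)"
proof -
  have "apply_op dx s (Lop u) (wser phi) = (\<lambda>i. wser phi (i - 2))"
    using assms(2) by (simp add: wave_eqs_def)
  then have "lser_rep (\<lambda>i. wser phi (i - 2)) (twisted_deriv (tser_dx dx) (tser_const s)
      (twisted_deriv (tser_dx dx) (tser_const s) (wave_fls phi)) + fls_const (2 * Abs_tser u) * wave_fls phi)"
    using lser_rep_apply_op_Lop[OF dx lser_rep_wser, of s u phi] by (simp add: numeral_2_eq_2)
  then show ?thesis
    unfolding schroedinger_eq_def using lser_rep_shift_2[OF lser_rep_wser] by (rule lser_rep_unique)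
qed

lemma dual_wave_function_pairings:
  assumes dx: "derivation dx" and "is_dual_wave_function sc dx u phi phis"
  shows "wave_fls phi \<in> vanishing_pairings (tser_dx dx) (wave_fls phis) 1"
  unfolding vanishing_pairings_def
proof (intro CollectI allI)
  fix i
  have "lser_rep (lmult ((shiftd dx 1 ^^ i) (wser phi)) (wser phis))
      ((twisted_deriv (tser_dx dx) 1 ^^ i) (wave_fls phi) * wave_fls phis)"
    using lser_rep_lmult[OF lser_rep_shiftd_power[OF dx lser_rep_wser, where s=1 and n=i]
        lser_rep_wser[of phis]] by simp
  moreover have "lmult ((shiftd dx 1 ^^ i) (wser phi)) (wser phis) (-1) = ser_zero"
    using assms(2) by (simp add: is_dual_wave_function_def)
  ultimately show "((twisted_deriv (tser_dx dx) 1 ^^ i) (wave_fls phi) * wave_fls phis) $$ 1 = 0"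
    by (simp add: lser_rep_def tser_nth_eq_zero_iff)
qed

lemma kdv_setting_derivation: "kdv_setting sc dx V \<Longrightarrow> derivation dx"
  by (simp add: kdv_setting_def derivation_def)

lemma kdv_setting_half: "kdv_setting sc dx V \<Longrightarrow> 2 * tser_const (sc (1/2)) = (1 :: 'a::comm_ring_1 tser)"
proof -
  assume "kdv_setting sc dx V"
  then have add: "sc (a + b) = sc a + sc b" and mult: "sc (a * b) = sc a * sc b" and "sc 1 = 1" for a b
    by (simp_all add: kdv_setting_def)
  then have "2 * sc (1/2) = sc (2 * (1/2))"
    by (metis mult one_add_one)
  then have "2 * sc (1/2) = (1::'a)"
    using \<open>sc 1 = 1\<close> by simp
  then show ?thesis
    by (metis tser_const_mult tser_const_numeral tser_const_one)
qed

lemma kdv_setting_differential_subring: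
  assumes S: "kdv_setting sc dx V"
  shows "differential_subring (tser_dx dx) {x. ser_in V (tser_nth x)}"
    and "tser_const (sc c) \<in> {x. ser_in V (tser_nth x)}"
proof -
  have sc_in: "sc c \<in> V" for c
    using S by (auto simp: kdv_setting_def)
  have "0 \<in> V"
    using sc_in[of 0] S by (metis kdv_setting_def add_cancel_right_right add_0)
  have add: "a + b \<in> V" and mult: "a * b \<in> V" if "a \<in> V" "b \<in> V" for a b
    using S that by (simp_all add: kdv_setting_def)
  have sum: "sum f I \<in> V" if "\<And>i. i \<in> I \<Longrightarrow> f i \<in> V" for f and I :: "'b set"
    using that \<open>0 \<in> V\<close> by (induction I rule: infinite_finite_induct) (auto intro: add)
  show "differential_subring (tser_dx dx) {x. ser_in V (tser_nth x)}"
    using S sc_in[of 1] \<open>0 \<in> V\<close>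
    by (auto simp: differential_subring_def ser_in_def kdv_setting_def ser_zero_def ser_one_def
        tser_nth_mult ser_mult_def intro!: sum mult)
  show "tser_const (sc c) \<in> {x. ser_in V (tser_nth x)}"
    using \<open>0 \<in> V\<close> sc_in by (simp add: ser_in_def tser_const_def)
qed

lemma lser_rep_bounded: "\<forall>i>n. B i = ser_zero \<Longrightarrow> \<exists>x. lser_rep B x"
proof -
  assume B: "\<forall>i>n. B i = ser_zero"
  define x where "x = Abs_fls (\<lambda>k. Abs_tser (B (- k)))"
  have "x $$ k = Abs_tser (B (- k))" for k
    unfolding x_def by (rule nth_Abs_fls_lower_bound[where N="- n"]) (auto simp: B Abs_tser_zero)
  then have "lser_rep B x" by (simp add: lser_rep_def)
  then show ?thesis by blast
qed

lemma lser_rep_b_equation_iff: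
  assumes S: "kdv_setting sc dx V" and B: "lser_rep B x"
  shows "lsub (lsub (lmult B (ldx dx (ldx dx B)))
                 (lscale (sc (1/2)) (lmult (ldx dx B) (ldx dx B))))
           (lscale 2 (lmult (lsub lvar (lconst (ser_scale 2 u))) (lmult B B)))
      = lscale (-2) lvar \<longleftrightarrow>
    b_operator (tser_dx dx) (tser_const (sc (1/2))) (Abs_tser u) zvar x = - (2 * zvar)"
proof -
  have dx: "derivation dx" by (rule kdv_setting_derivation[OF S])
  let ?d = "tser_dx dx"
  have "lser_rep (lsub (lsub (lmult B (ldx dx (ldx dx B)))
                 (lscale (sc (1/2)) (lmult (ldx dx B) (ldx dx B))))
           (lscale 2 (lmult (lsub lvar (lconst (ser_scale 2 u))) (lmult B B))))
      (x * fls_map ?d (fls_map ?d x) - fls_const (tser_const (sc (1/2))) * (fls_map ?d x * fls_map ?d x)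
        - fls_const (tser_const 2) * ((zvar - fls_const (Abs_tser (ser_scale 2 u))) * (x * x)))"
    by (intro lser_rep_lsub lser_rep_lmult lser_rep_lscale lser_rep_ldx[OF dx] B lser_rep_lvar
        lser_rep_lconst)
  moreover have "Abs_tser (ser_scale 2 u) = 2 * Abs_tser u"
    by (simp add: ser_scale_eq)
  ultimately have "lser_rep (lsub (lsub (lmult B (ldx dx (ldx dx B)))
                 (lscale (sc (1/2)) (lmult (ldx dx B) (ldx dx B))))
           (lscale 2 (lmult (lsub lvar (lconst (ser_scale 2 u))) (lmult B B))))
      (b_operator ?d (tser_const (sc (1/2))) (Abs_tser u) zvar x)"
    by (simp add: b_operator_def)
  moreover have "lser_rep (lscale (-2) lvar) (- (2 * zvar))"
    using lser_rep_lscale[OF lser_rep_lvar, of "-2"] by (simp add: tser_const_uminus)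
  ultimately show ?thesis
    by (rule lser_rep_eq_iff)
qed

lemma lser_rep_bser:
  assumes S: "kdv_setting sc dx V" and u: "ser_in V u"
    and B_eq: "b_operator (tser_dx dx) (tser_const (sc (1/2))) (Abs_tser u) zvar B = - (2 * zvar)"
    and B0: "B $$ 0 = 1" and B_nneg: "\<forall>k<0. B $$ k = 0"
  shows "lser_rep (bser sc dx V u) B"
proof -
  have d: "derivation (tser_dx dx)"
    by (rule derivation_tser_dx[OF kdv_setting_derivation[OF S]])
  note H = kdv_setting_half[OF S] and subring = kdv_setting_differential_subring[OF S]
  define F where "F = (\<lambda>i. tser_nth (B $$ (- i)))"
  have F: "lser_rep F B" by (simp add: F_def lser_rep_def)
  have "B $$ k \<in> {x. ser_in V (tser_nth x)}" for k
    using u by (intro b_operator_eq_coeff_in[OF d H subring(1) subring(2) _ B_eq B0 B_nneg]) simp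
  then have F_char: "F 0 = ser_one \<and> (\<forall>i>0. F i = ser_zero) \<and> (\<forall>i. ser_in V (F i)) \<and>
      lsub (lsub (lmult F (ldx dx (ldx dx F)))
                 (lscale (sc (1/2)) (lmult (ldx dx F) (ldx dx F))))
           (lscale 2 (lmult (lsub lvar (lconst (ser_scale 2 u))) (lmult F F)))
      = lscale (-2) lvar"
    using B0 B_nneg B_eq lser_rep_b_equation_iff[OF S F, of u] by (auto simp: F_def)
  have "F' = F" if F'_char: "F' 0 = ser_one \<and> (\<forall>i>0. F' i = ser_zero) \<and> (\<forall>i. ser_in V (F' i)) \<and>
      lsub (lsub (lmult F' (ldx dx (ldx dx F')))
                 (lscale (sc (1/2)) (lmult (ldx dx F') (ldx dx F'))))
           (lscale 2 (lmult (lsub lvar (lconst (ser_scale 2 u))) (lmult F' F')))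
      = lscale (-2) lvar" for F'
  proof -
    obtain x where x: "lser_rep F' x" using lser_rep_bounded[of 0 F'] F'_char by blast
    have "x = B"
    proof (rule b_operator_eq_unique[OF d H _ _ _ B_eq B0 B_nneg])
      show "b_operator (tser_dx dx) (tser_const (sc (1/2))) (Abs_tser u) zvar x = - (2 * zvar)"
        using lser_rep_b_equation_iff[OF S x, of u] F'_char by blast
      show "x $$ 0 = 1" "\<forall>k<0. x $$ k = 0"
        using F'_char by (simp_all add: lser_rep_nth[OF x] one_tser_def Abs_tser_zero)
    qed
    then show ?thesis using x F lser_rep_eq_iff by blast
  qed
  then have "bser sc dx V u = F"
    unfolding bser_def using F_char by (intro the_equality) blast+
  then show ?thesis using F by simp
qed

lemma wave_fls_0: "wave_fls phi $$ 0 = 1" and wave_fls_neg: "\<forall>k<0. wave_fls phi $$ k = 0"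
  by (simp_all add: wave_fls_nth)

lemma wave_functions_schroedinger_eq:
  assumes dx: "derivation dx"
    and psi: "is_wave_function sc dx u phi" and dual: "is_dual_wave_function sc dx u phi phis"
  shows "schroedinger_eq (tser_dx dx) (Abs_tser u) 1 (wave_fls phi)"
    and "schroedinger_eq (tser_dx dx) (Abs_tser u) (-1) (wave_fls phis)"
  using wave_eqs_schroedinger_eq[OF dx, of sc u 1 phi] wave_eqs_schroedinger_eq[OF dx, of sc u "-1" phis]
    psi dual by (simp_all add: is_wave_function_def is_dual_wave_function_def tser_const_uminus)

lemma wronskian_wave_functions:
  assumes S: "kdv_setting sc dx V"
    and psi: "is_wave_function sc dx u phi" and dual: "is_dual_wave_function sc dx u phi phis"
  shows "wronskian (tser_dx dx) (wave_fls phi) (wave_fls phis) = - (2 * zvar)"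
proof -
  have dx: "derivation dx" by (rule kdv_setting_derivation[OF S])
  show ?thesis
    by (rule wronskian_eq[OF derivation_tser_dx[OF dx] kdv_setting_half[OF S] wave_fls_0 wave_fls_neg
          wave_fls_0 wave_fls_neg wave_functions_schroedinger_eq[OF dx psi dual]
          dual_wave_function_pairings[OF dx dual]])
qed

lemma lser_rep_lsq_bser:
  assumes S: "kdv_setting sc dx V" and u: "ser_in V u"
    and psi: "is_wave_function sc dx u phi" and dual: "is_dual_wave_function sc dx u phi phis"
  shows "lser_rep (lsq (bser sc dx V u)) (wave_fls phi * wave_fls phis)"
proof -
  have dx: "derivation dx" by (rule kdv_setting_derivation[OF S])
  define d f g H where "d = tser_dx dx" and "f = wave_fls phi" and "g = wave_fls phis"
    and "H = tser_const (sc (1/2))"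
  have d: "derivation d" unfolding d_def by (rule derivation_tser_dx[OF dx])
  have H: "2 * H = 1" unfolding H_def by (rule kdv_setting_half[OF S])
  have f_nneg: "\<forall>k<0. f $$ k = 0" and g_nneg: "\<forall>k<0. g $$ k = 0"
    unfolding f_def g_def by (rule wave_fls_neg)+
  note f_eq = wave_functions_schroedinger_eq(1)[OF dx psi dual, folded d_def f_def]
    and g_eq = wave_functions_schroedinger_eq(2)[OF dx psi dual, folded d_def g_def]
    and pairings = dual_wave_function_pairings[OF dx dual, folded d_def f_def g_def]
  have fg_even: "fls_even (f * g)"
    by (rule wave_product_even[OF d f_eq f_nneg g_nneg pairings])
  have "b_operator d H (Abs_tser u) (zvar * zvar) (f * g) = - (fls_const H * (4 * (zvar * zvar)))"
    using b_operator_wave_product[OF d H f_eq g_eq] wronskian_wave_functions[OF S psi dual]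
    by (simp add: d_def f_def g_def algebra_simps)
  also have "\<dots> = - (2 * (zvar * zvar))"
  proof -
    have "2 * fls_const H = (1 :: 'a tser fls)"
      by (metis H fls_const_1 fls_const_mult_const fls_const_numeral)
    moreover have "fls_const H * (4 * (zvar * zvar)) = (2 * fls_const H) * (2 * (zvar * zvar))"
      by (simp add: algebra_simps)
    ultimately show ?thesis by simp
  qed
  finally have "b_operator d H (Abs_tser u) zvar (fls_halve (f * g)) = - (2 * zvar)"
    by (rule b_operator_eq_halve[OF d fg_even])
  moreover have "fls_halve (f * g) $$ 0 = 1" "\<forall>k<0. fls_halve (f * g) $$ k = 0"
    using fls_times_nth_nonneg[OF f_nneg g_nneg, of 0] fls_times_nth_neg[OF f_nneg g_nneg]
    by (simp_all add: fls_halve_nth f_def g_def wave_fls_nth)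
  ultimately have "lser_rep (bser sc dx V u) (fls_halve (f * g))"
    unfolding d_def H_def by (rule lser_rep_bser[OF S u])
  then have "lser_rep (lsq (bser sc dx V u)) (fls_compose_power (fls_halve (f * g)) 2)"
    by (rule lser_rep_lsq)
  then have "lser_rep (lsq (bser sc dx V u)) (f * g)"
    unfolding fls_compose_power_halve[OF fg_even] .
  then show ?thesis by (simp add: f_def g_def)
qed

section \<open>Two spectral variables\<close>

text \<open>A series in \<open>z\<close> and \<open>w\<close> is a Laurent series in \<open>w\<^sup>-\<^sup>1\<close> whose coefficients are Laurent series
  in \<open>z\<^sup>-\<^sup>1\<close>; thus \<open>fls_const\<close> embeds series in \<open>z\<close>, and \<open>fls_map fls_const\<close> series in \<open>w\<close>.\<close>

definition bser_rep :: "'a::comm_ring_1 bser \<Rightarrow> 'a tser fls fls \<Rightarrow> bool" where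
  "bser_rep P X \<longleftrightarrow> P = (\<lambda>i j. tser_nth (X $$ (- j) $$ (- i)))"

definition fls2_bounded :: "'b::zero fls fls \<Rightarrow> bool" where
  "fls2_bounded X \<longleftrightarrow> (\<exists>n. \<forall>c a. c < n \<or> a < n \<longrightarrow> X $$ c $$ a = 0)"

lemma bser_rep_nth: "bser_rep P X \<Longrightarrow> X $$ c $$ a = Abs_tser (P (- a) (- c))"
  by (simp add: bser_rep_def)

lemma bser_rep_unique: "bser_rep P X \<Longrightarrow> bser_rep P Y \<Longrightarrow> X = Y"
  by (intro fls_eqI) (simp add: bser_rep_nth)

lemma bser_rep_eq: "bser_rep P X \<Longrightarrow> bser_rep Q X \<Longrightarrow> P = Q"
  by (simp add: bser_rep_def)

lemma bser_rep_bbdd: "bser_rep P X \<Longrightarrow> fls2_bounded X \<Longrightarrow> bbdd P"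
  unfolding bbdd_def fls2_bounded_def bser_rep_def
  by (metis minus_less_iff tser_nth_zero)

lemma bbdd_imp_bser_rep: "bbdd P \<Longrightarrow> \<exists>X. bser_rep P X \<and> fls2_bounded X"
proof -
  assume "bbdd P"
  then obtain n where n: "\<forall>i j. n < i \<or> n < j \<longrightarrow> P i j = ser_zero" by (auto simp: bbdd_def)
  define Xc where "Xc = (\<lambda>c. Abs_fls (\<lambda>a. Abs_tser (P (- a) (- c))))"
  have Xc_nth: "Xc c $$ a = Abs_tser (P (- a) (- c))" for c a
    unfolding Xc_def by (rule nth_Abs_fls_lower_bound[where N="- n"]) (auto simp: n Abs_tser_zero)
  define X where "X = Abs_fls Xc"
  have Xc0: "Xc c = 0" if "c < - n" for c
    using that by (intro fls_eqI) (simp add: Xc_nth n Abs_tser_zero)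
  have X_nth: "X $$ c = Xc c" for c
    unfolding X_def by (rule nth_Abs_fls_lower_bound[where N="- n"]) (auto simp: Xc0)
  have "bser_rep P X" by (simp add: bser_rep_def X_nth Xc_nth)
  moreover have "fls2_bounded X" unfolding fls2_bounded_def
    by (rule exI[of _ "- n"]) (auto simp: X_nth Xc_nth n Abs_tser_zero)
  ultimately show ?thesis by blast
qed

lemma fls2_bounded_common:
  assumes "fls2_bounded X" "fls2_bounded Y"
  obtains n where "\<And>c a. c < n \<or> a < n \<Longrightarrow> X $$ c $$ a = 0"
    and "\<And>c a. c < n \<or> a < n \<Longrightarrow> Y $$ c $$ a = 0"
proof -
  obtain n m where n: "\<forall>c a. c < n \<or> a < n \<longrightarrow> X $$ c $$ a = 0"
    and m: "\<forall>c a. c < m \<or> a < m \<longrightarrow> Y $$ c $$ a = 0"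
    using assms by (auto simp: fls2_bounded_def)
  show ?thesis by (rule that[of "min n m"]) (use n m in auto)
qed

lemma fls2_bounded_pointwise:
  assumes "fls2_bounded X" "fls2_bounded Y"
    and "\<And>c a. X $$ c $$ a = 0 \<Longrightarrow> Y $$ c $$ a = 0 \<Longrightarrow> Z $$ c $$ a = 0"
  shows "fls2_bounded Z"
  using fls2_bounded_common[OF assms(1,2)] assms(3) unfolding fls2_bounded_def by metis

lemma fls2_bounded_diff: "fls2_bounded X \<Longrightarrow> fls2_bounded Y \<Longrightarrow> fls2_bounded (X - Y)"
  by (erule fls2_bounded_pointwise) simp_all

lemma fls2_bounded_const: "fls2_bounded (fls_const x)"
  unfolding fls2_bounded_def by (rule exI[of _ "min 0 (fls_subdegree x)"]) auto

lemma fls2_bounded_in_w: "fls2_bounded (fls_map fls_const x)"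
  unfolding fls2_bounded_def by (rule exI[of _ "min 0 (fls_subdegree x)"]) auto

lemma fls2_times_nth_bounded:
  fixes X Y :: "'b::comm_ring_1 fls fls"
  assumes X: "\<And>c a. c < n \<or> a < n \<Longrightarrow> X $$ c $$ a = 0"
    and Y: "\<And>c a. c < n \<or> a < n \<Longrightarrow> Y $$ c $$ a = 0"
  shows "(X * Y) $$ c $$ a = (\<Sum>c'=n..c - n. \<Sum>a'=n..a - n. X $$ c' $$ a' * Y $$ (c - c') $$ (a - a'))"
proof -
  have "(X * Y) $$ c $$ a = (\<Sum>c'=n..c - n. (X $$ c' * Y $$ (c - c')) $$ a)"
    by (subst fls_times_nth_bounded[where a=n and b=n]) (auto intro: fls_eqI simp: X Y fls_sum_nth)
  also have "\<dots> = (\<Sum>c'=n..c - n. \<Sum>a'=n..a - n. X $$ c' $$ a' * Y $$ (c - c') $$ (a - a'))"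
    by (intro sum.cong refl, subst fls_times_nth_bounded[where a=n and b=n]) (auto simp: X Y)
  finally show ?thesis .
qed

lemma fls2_bounded_mult:
  fixes X Y :: "'b::comm_ring_1 fls fls"
  assumes "fls2_bounded X" "fls2_bounded Y" shows "fls2_bounded (X * Y)"
proof -
  obtain n where X: "\<And>c a. c < n \<or> a < n \<Longrightarrow> X $$ c $$ a = 0"
    and Y: "\<And>c a. c < n \<or> a < n \<Longrightarrow> Y $$ c $$ a = 0"
    using fls2_bounded_common[OF assms] by blast
  show ?thesis
    unfolding fls2_bounded_def
    by (intro exI[of _ "2 * n"] allI impI) (auto simp: fls2_times_nth_bounded[OF X Y])
qed

lemma bser_rep_bz: "lser_rep F x \<Longrightarrow> bser_rep (bz F) (fls_const x)"
  unfolding bser_rep_def lser_rep_def bz_def by (auto simp: fun_eq_iff ser_zero_def)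

lemma bser_rep_bw: "lser_rep F x \<Longrightarrow> bser_rep (bw F) (fls_map fls_const x)"
  unfolding bser_rep_def lser_rep_def bw_def by (auto simp: fun_eq_iff ser_zero_def)

lemma bser_rep_badd: "bser_rep P X \<Longrightarrow> bser_rep Q Y \<Longrightarrow> bser_rep (badd P Q) (X + Y)"
  unfolding bser_rep_def badd_def ser_add_def by (auto simp: fun_eq_iff)

lemma bser_rep_bsub: "bser_rep P X \<Longrightarrow> bser_rep Q Y \<Longrightarrow> bser_rep (bsub P Q) (X - Y)"
  unfolding bser_rep_def bsub_def ser_sub_def by (auto simp: fun_eq_iff)

lemma bser_rep_bscale: "bser_rep P X \<Longrightarrow> bser_rep (bscale c P) (fls_const (fls_const (tser_const c)) * X)"
  unfolding bser_rep_def bscale_def by clarify (simp add: fun_eq_iff ser_scale_eq)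

lemma bser_rep_bdx: "derivation dx \<Longrightarrow> bser_rep P X \<Longrightarrow> bser_rep (bdx dx P) (fls_map (fls_map (tser_dx dx)) X)"
  unfolding bser_rep_def bdx_def
  by clarify (simp add: fun_eq_iff ser_dt_0_eq derivation_zero derivation_tser_dx derivation_fls_map)

lemma bser_rep_bmult:
  assumes P: "bser_rep P X" and Q: "bser_rep Q Y" and X: "fls2_bounded X" and Y: "fls2_bounded Y"
  shows "bser_rep (bmult P Q) (X * Y)"
  unfolding bser_rep_def
proof (intro ext)
  fix i j M
  obtain n where Xz: "\<And>c a. c < n \<or> a < n \<Longrightarrow> X $$ c $$ a = 0"
    and Yz: "\<And>c a. c < n \<or> a < n \<Longrightarrow> Y $$ c $$ a = 0"
    using fls2_bounded_common[OF X Y] by blast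
  have P_eq: "P a c = tser_nth (X $$ (- c) $$ (- a))" and Q_eq: "Q a c = tser_nth (Y $$ (- c) $$ (- a))" for a c
    using P Q by (simp_all add: bser_rep_def)
  define t where "t = (\<lambda>(a, c). ser_mult (P a c) (Q (i - a) (j - c)) M)"
  have t_eq: "t (- a', - c') = tser_nth (X $$ c' $$ a' * Y $$ (- j - c') $$ (- i - a')) M" for a' c'
  proof -
    have e: "- c' - j = - j - c'" "- a' - i = - i - a'" by simp_all
    show ?thesis by (simp add: t_def P_eq Q_eq tser_nth_mult e)
  qed
  define C A where "C = {n..- j - n}" and "A = {n..- i - n}"
  have "tser_nth ((X * Y) $$ (- j) $$ (- i)) M = (\<Sum>(c', a')\<in>C \<times> A. t (- a', - c'))"
    by (simp add: fls2_times_nth_bounded[OF Xz Yz] tser_nth_sum t_eq C_def A_def sum.cartesian_product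
        case_prod_beta)
  also have "\<dots> = (\<Sum>p\<in>(\<lambda>(c', a'). (- a', - c')) ` (C \<times> A). t p)"
    by (simp add: sum.reindex inj_on_def case_prod_beta)
  also have "\<dots> = (\<Sum>p\<in>{(a, c). P a c \<noteq> ser_zero \<and> Q (i - a) (j - c) \<noteq> ser_zero}. t p)"
  proof (rule sum.mono_neutral_right)
    show "{(a, c). P a c \<noteq> ser_zero \<and> Q (i - a) (j - c) \<noteq> ser_zero} \<subseteq> (\<lambda>(c', a'). (- a', - c')) ` (C \<times> A)"
    proof
      fix p assume "p \<in> {(a, c). P a c \<noteq> ser_zero \<and> Q (i - a) (j - c) \<noteq> ser_zero}"
      then obtain a c where p: "p = (a, c)" and "X $$ (- c) $$ (- a) \<noteq> 0" "Y $$ (c - j) $$ (a - i) \<noteq> 0"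
        by (auto simp: P_eq Q_eq tser_nth_eq_zero_iff)
      then have "- c \<in> C" "- a \<in> A"
        using Xz Yz unfolding C_def A_def by (smt (verit) atLeastAtMost_iff)+
      then show "p \<in> (\<lambda>(c', a'). (- a', - c')) ` (C \<times> A)"
        unfolding p by (intro rev_image_eqI[of "(- c, - a)"]) auto
    qed
    show "\<forall>p\<in>(\<lambda>(c', a'). (- a', - c')) ` (C \<times> A) - {(a, c). P a c \<noteq> ser_zero \<and> Q (i - a) (j - c) \<noteq> ser_zero}. t p = 0"
      by (auto simp: t_def ser_mult_def ser_zero_def)
  qed (simp add: A_def C_def)
  finally show "bmult P Q i j M = tser_nth ((X * Y) $$ (- j) $$ (- i)) M"
    by (simp add: bmult_def t_def case_prod_beta)
qed

lemma fls_inverse_exists: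
  fixes x :: "'b::comm_ring_1 fls"
  assumes "x $$ 0 = 1" and "\<forall>k<0. x $$ k = 0"
  shows "\<exists>y. x * y = 1"
proof -
  have x: "x = fps_to_fls (fls_regpart x)"
    using assms(2) by (intro fls_eqI) auto
  have "fls_regpart x * fps_right_inverse (fls_regpart x) 1 = 1"
    using assms(1) by (intro fps_right_inverse) simp
  then have "x * fps_to_fls (fps_right_inverse (fls_regpart x) 1) = 1"
    by (subst x) (simp flip: fls_times_fps_to_fls)
  then show ?thesis by blast
qed

lemma bser_rep_bquot:
  assumes A: "bser_rep A X" "fls2_bounded X" and B: "bser_rep B Y" "fls2_bounded Y"
    and inv: "X' * X = 1" and XY: "fls2_bounded (X' * Y)"
  shows "bser_rep (bquot B A) (X' * Y)"
proof -
  define Q where "Q = (\<lambda>i j. tser_nth ((X' * Y) $$ (- j) $$ (- i)))"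
  have Q: "bser_rep Q (X' * Y)" by (simp add: bser_rep_def Q_def)
  have "X * (X' * Y) = (X' * X) * Y" by (simp only: mult_ac)
  then have "X * (X' * Y) = Y" using inv by simp
  then have "bmult A Q = B"
    using bser_rep_bmult[OF A(1) Q A(2) XY] B(1) by (intro bser_rep_eq) simp_all
  moreover have "R = Q" if R: "bbdd R" "bmult A R = B" for R
  proof -
    obtain Z where Z: "bser_rep R Z" "fls2_bounded Z" using bbdd_imp_bser_rep R(1) by blast
    have "X * Z = Y"
      using bser_rep_bmult[OF A(1) Z(1) A(2) Z(2)] B(1) R(2) by (auto intro: bser_rep_unique)
    then have "Z = X' * Y" using inv by (metis mult.assoc mult_1)
    then show "R = Q" using Z(1) Q by (simp add: bser_rep_eq)
  qed
  ultimately have "bquot B A = Q"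
    unfolding bquot_def using bser_rep_bbdd[OF Q XY] by (intro the_equality) blast+
  then show ?thesis using Q by simp
qed

section \<open>The kernels\<close>

text \<open>The numerators \<open>(w\<^sup>2 - z\<^sup>2) K\<close> and \<open>(w\<^sup>2 - z\<^sup>2) D\<close> with the exponential factors removed, for
  \<open>R = b(z\<^sup>2)\<close>, \<open>\<psi> = f e\<^sup>x\<^sup>z\<close> and \<open>\<psi>\<^sup>* = g e\<^sup>-\<^sup>x\<^sup>z\<close>.\<close>

definition kernel_numerator :: "('r::comm_ring_1 \<Rightarrow> 'r) \<Rightarrow> 'r \<Rightarrow> 'r fls \<Rightarrow> 'r fls fls" where
  "kernel_numerator d H R =
     fls_const (fls_const H) * (fls_const R * fls_map fls_const (fls_map d R)
       - fls_map fls_const R * fls_const (fls_map d R))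
     - (fls_map fls_const zvar * fls_const R + fls_const zvar * fls_map fls_const R)"

definition cross_wronskian :: "('r::comm_ring_1 \<Rightarrow> 'r) \<Rightarrow> 'r fls \<Rightarrow> 'r fls \<Rightarrow> 'r fls fls" where
  "cross_wronskian d f g = fls_const f * fls_map fls_const (twisted_deriv d (-1) g)
     - fls_map fls_const g * fls_const (twisted_deriv d 1 f)"

lemma kernel_identity:
  fixes a b a' b' z c e c' e' w h :: "'r::comm_ring_1"
  assumes h: "2 * h = 1"
    and Wz: "a * b' - a' * b - 2 * (z * (a * b)) = - (2 * z)"
    and Ww: "c * e' - c' * e - 2 * (w * (c * e)) = - (2 * w)"
  shows "h * ((a * b) * (c' * e + c * e') - (c * e) * (a' * b + a * b')) - (w * (a * b) + z * (c * e))
    = (b * c) * (a * (e' - w * e) - e * (a' + z * a))"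
proof -
  have c'e: "c' * e = c * e' - 2 * (w * (c * e)) + 2 * w"
    using Ww by (simp add: algebra_simps eq_neg_iff_add_eq_0)
  have ab': "a * b' = a' * b + 2 * (z * (a * b)) - 2 * z"
    using Wz by (simp add: algebra_simps eq_neg_iff_add_eq_0)
  define T where "T = (a * b) * (c * e' - w * (c * e) + w) - (c * e) * (a' * b + z * (a * b) - z)"
  have "(a * b) * (c' * e + c * e') - (c * e) * (a' * b + a * b') = 2 * T"
    unfolding c'e ab' T_def by (simp add: algebra_simps)
  then have "h * ((a * b) * (c' * e + c * e') - (c * e) * (a' * b + a * b')) = T"
    using h by (simp add: mult.assoc[symmetric] mult.commute[of h 2])
  then show ?thesis unfolding T_def by (simp add: algebra_simps)
qed

lemma kernel_numerator_wave_product: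
  fixes f g :: "'r::comm_ring_1 fls"
  assumes d: "derivation d" and H: "2 * H = (1::'r)" and W: "wronskian d f g = - (2 * zvar)"
  shows "kernel_numerator d H (f * g) = (fls_const g * fls_map fls_const f) * cross_wronskian d f g"
proof -
  define Z W' f' g' where "Z = (fls_const :: 'r fls \<Rightarrow> 'r fls fls)"
    and "W' = (fls_map fls_const :: 'r fls \<Rightarrow> 'r fls fls)"
    and "f' = fls_map d f" and "g' = fls_map d g"
  have z: "ring_hom_fun Z" unfolding Z_def by (rule ring_hom_fun_fls_const)
  have w: "ring_hom_fun W'" unfolding W'_def by (rule ring_hom_fun_fls_map[OF ring_hom_fun_fls_const])
  have h: "2 * fls_const (fls_const H) = (1 :: 'r fls fls)"
    using H by (metis fls_const_1 fls_const_mult_const fls_const_numeral)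
  have Wz: "Z f * Z g' - Z f' * Z g - 2 * (Z zvar * (Z f * Z g)) = - (2 * Z zvar)"
    using arg_cong[OF W, of Z] unfolding wronskian_def f'_def g'_def
    by (simp add: ring_hom_fun_diff[OF z] ring_hom_fun_mult[OF z] ring_hom_fun_uminus[OF z]
        ring_hom_fun_numeral[OF z])
  have Ww: "W' f * W' g' - W' f' * W' g - 2 * (W' zvar * (W' f * W' g)) = - (2 * W' zvar)"
    using arg_cong[OF W, of W'] unfolding wronskian_def f'_def g'_def
    by (simp add: ring_hom_fun_diff[OF w] ring_hom_fun_mult[OF w] ring_hom_fun_uminus[OF w]
        ring_hom_fun_numeral[OF w])
  have "kernel_numerator d H (f * g) = fls_const (fls_const H) *
      ((Z f * Z g) * (W' f' * W' g + W' f * W' g') - (W' f * W' g) * (Z f' * Z g + Z f * Z g'))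
      - (W' zvar * (Z f * Z g) + Z zvar * (W' f * W' g))"
    unfolding kernel_numerator_def fls_map_mult_derivation[OF d] Z_def[symmetric] W'_def[symmetric]
      f'_def[symmetric] g'_def[symmetric]
    by (simp only: ring_hom_fun_mult[OF z] ring_hom_fun_mult[OF w] ring_hom_fun_add[OF z]
        ring_hom_fun_add[OF w])
  also have "\<dots> = (Z g * W' f) * (Z f * (W' g' - W' zvar * W' g) - W' g * (Z f' + Z zvar * Z f))"
    by (rule kernel_identity[OF h Wz Ww])
  also have "\<dots> = (fls_const g * fls_map fls_const f) * cross_wronskian d f g"
  proof -
    have "twisted_deriv d (-1) g = g' - zvar * g" "twisted_deriv d 1 f = f' + zvar * f"
      by (simp_all add: twisted_deriv_def f'_def g'_def)
    then show ?thesis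
      unfolding cross_wronskian_def Z_def[symmetric] W'_def[symmetric]
      by (simp only: ring_hom_fun_mult[OF z] ring_hom_fun_mult[OF w] ring_hom_fun_add[OF z]
          ring_hom_fun_diff[OF w])
  qed
  finally show ?thesis .
qed

lemma bser_rep_Knum:
  assumes S: "kdv_setting sc dx V" and R: "lser_rep (lsq (bser sc dx V u)) R"
  shows "bser_rep (Knum sc dx V u) (kernel_numerator (tser_dx dx) (tser_const (sc (1/2))) R)"
proof -
  have dx: "derivation dx" by (rule kdv_setting_derivation[OF S])
  have d: "derivation (tser_dx dx)" by (rule derivation_tser_dx[OF dx])
  have z: "fls_map (fls_map (tser_dx dx)) (fls_const x) = fls_const (fls_map (tser_dx dx) x)" for x
    using d by (simp add: fls_map_const derivation_zero derivation_fls_map)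
  have w: "fls_map (fls_map (tser_dx dx)) (fls_map fls_const x) = fls_map fls_const (fls_map (tser_dx dx) x)"
    for x using d by (intro fls_eqI) (simp add: derivation_zero derivation_fls_map fls_map_const)
  note bz = bser_rep_bz[OF R] and bw = bser_rep_bw[OF R]
    and bdz = bser_rep_bdx[OF dx bser_rep_bz[OF R], unfolded z]
    and bdw = bser_rep_bdx[OF dx bser_rep_bw[OF R], unfolded w]
    and bounded = fls2_bounded_const fls2_bounded_in_w
  show ?thesis
    unfolding Knum_def Let_def kernel_numerator_def
    by (intro bser_rep_bsub bser_rep_bscale bser_rep_badd bser_rep_bmult[OF bz bdw]
        bser_rep_bmult[OF bw bdz] bser_rep_bmult[OF bser_rep_bw[OF lser_rep_lvar] bz]
        bser_rep_bmult[OF bser_rep_bz[OF lser_rep_lvar] bw] bounded)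
qed

lemma bser_rep_Dnum:
  assumes dx: "derivation dx"
  shows "bser_rep (Dnum dx phi phis) (cross_wronskian (tser_dx dx) (wave_fls phi) (wave_fls phis))"
  unfolding Dnum_def cross_wronskian_def
  using lser_rep_shiftd[OF dx lser_rep_wser, of "-1" phis] lser_rep_shiftd[OF dx lser_rep_wser, of 1 phi]
  by (intro bser_rep_bsub bser_rep_bmult bser_rep_bz bser_rep_bw lser_rep_wser
      fls2_bounded_const fls2_bounded_in_w) (simp_all add: tser_const_uminus)

lemma fls2_bounded_cross_wronskian: "fls2_bounded (cross_wronskian d f g)"
  unfolding cross_wronskian_def
  by (intro fls2_bounded_diff fls2_bounded_mult fls2_bounded_const fls2_bounded_in_w)

lemma Knum_eq_wave_kernel:
  assumes S: "kdv_setting sc dx V" and u: "ser_in V u"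
    and psi: "is_wave_function sc dx u phi" and dual: "is_dual_wave_function sc dx u phi phis"
  shows "Knum sc dx V u = bmult (bmult (bz (wser phis)) (bw (wser phi))) (Dnum dx phi phis)"
proof -
  have dx: "derivation dx" by (rule kdv_setting_derivation[OF S])
  have "bser_rep (Knum sc dx V u)
      ((fls_const (wave_fls phis) * fls_map fls_const (wave_fls phi))
        * cross_wronskian (tser_dx dx) (wave_fls phi) (wave_fls phis))"
    using bser_rep_Knum[OF S lser_rep_lsq_bser[OF S u psi dual]]
    unfolding kernel_numerator_wave_product[OF derivation_tser_dx[OF dx] kdv_setting_half[OF S]
        wronskian_wave_functions[OF S psi dual]] .
  moreover have "bser_rep (bmult (bmult (bz (wser phis)) (bw (wser phi))) (Dnum dx phi phis))
      ((fls_const (wave_fls phis) * fls_map fls_const (wave_fls phi))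
        * cross_wronskian (tser_dx dx) (wave_fls phi) (wave_fls phis))"
    by (intro bser_rep_bmult bser_rep_bz bser_rep_bw lser_rep_wser bser_rep_Dnum[OF dx]
        fls2_bounded_mult fls2_bounded_const fls2_bounded_in_w fls2_bounded_cross_wronskian)
  ultimately show ?thesis
    by (rule bser_rep_eq)
qed

lemma bmult_bz_bquot_wave:
  assumes G: "lser_rep G (wave_fls phi * y)" and Y: "lser_rep Y y"
    and D: "bser_rep D X" "fls2_bounded X"
  shows "bmult (bz G) (bmult (bquot (bw (wser phi)) (bz (wser phi))) D)
    = bmult (bmult (bz Y) (bw (wser phi))) D"
proof -
  let ?f = "wave_fls phi"
  obtain f' where "?f * f' = 1"
    using fls_inverse_exists[OF wave_fls_0 wave_fls_neg] by blast
  then have inv: "fls_const f' * fls_const ?f = 1"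
    by (simp add: mult.commute)
  have "bser_rep (bquot (bw (wser phi)) (bz (wser phi))) (fls_const f' * fls_map fls_const ?f)"
    by (intro bser_rep_bquot[OF bser_rep_bz[OF lser_rep_wser] fls2_bounded_const
          bser_rep_bw[OF lser_rep_wser] fls2_bounded_in_w inv]
        fls2_bounded_mult fls2_bounded_const fls2_bounded_in_w)
  then have "bser_rep (bmult (bz G) (bmult (bquot (bw (wser phi)) (bz (wser phi))) D))
      (fls_const (?f * y) * ((fls_const f' * fls_map fls_const ?f) * X))"
    by (intro bser_rep_bmult bser_rep_bz[OF G] D fls2_bounded_mult fls2_bounded_const fls2_bounded_in_w)
  also have "fls_const (?f * y) * ((fls_const f' * fls_map fls_const ?f) * X)
      = (fls_const f' * fls_const ?f) * ((fls_const y * fls_map fls_const ?f) * X)"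
    by (simp only: fls_const_mult_const[symmetric] mult_ac)
  finally have "bser_rep (bmult (bz G) (bmult (bquot (bw (wser phi)) (bz (wser phi))) D))
      ((fls_const y * fls_map fls_const ?f) * X)"
    unfolding inv by simp
  moreover have "bser_rep (bmult (bmult (bz Y) (bw (wser phi))) D) ((fls_const y * fls_map fls_const ?f) * X)"
    by (intro bser_rep_bmult bser_rep_bz[OF Y] bser_rep_bw[OF lser_rep_wser] D
        fls2_bounded_mult fls2_bounded_const fls2_bounded_in_w)
  ultimately show ?thesis
    by (rule bser_rep_eq)
qed

lemma bmult_bw_bquot_wave:
  assumes G: "lser_rep G (y * wave_fls phis)" and Y: "lser_rep Y y"
    and D: "bser_rep D X" "fls2_bounded X"
  shows "bmult (bw G) (bmult (bquot (bz (wser phis)) (bw (wser phis))) D)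
    = bmult (bmult (bz (wser phis)) (bw Y)) D"
proof -
  let ?g = "wave_fls phis" and ?w = "fls_map fls_const :: 'a tser fls \<Rightarrow> 'a tser fls fls"
  have w: "ring_hom_fun ?w" by (rule ring_hom_fun_fls_map[OF ring_hom_fun_fls_const])
  obtain g' where "?g * g' = 1"
    using fls_inverse_exists[OF wave_fls_0 wave_fls_neg] by blast
  then have inv: "?w g' * ?w ?g = 1"
    by (simp add: mult.commute ring_hom_fun_one[OF w] flip: ring_hom_fun_mult[OF w])
  have "bser_rep (bquot (bz (wser phis)) (bw (wser phis))) (?w g' * fls_const ?g)"
    by (intro bser_rep_bquot[OF bser_rep_bw[OF lser_rep_wser] fls2_bounded_in_w
          bser_rep_bz[OF lser_rep_wser] fls2_bounded_const inv]
        fls2_bounded_mult fls2_bounded_const fls2_bounded_in_w)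
  then have "bser_rep (bmult (bw G) (bmult (bquot (bz (wser phis)) (bw (wser phis))) D))
      (?w (y * ?g) * ((?w g' * fls_const ?g) * X))"
    by (intro bser_rep_bmult bser_rep_bw[OF G] D fls2_bounded_mult fls2_bounded_const fls2_bounded_in_w)
  also have "?w (y * ?g) * ((?w g' * fls_const ?g) * X) = (?w g' * ?w ?g) * ((fls_const ?g * ?w y) * X)"
    by (simp only: ring_hom_fun_mult[OF w] mult_ac)
  finally have "bser_rep (bmult (bw G) (bmult (bquot (bz (wser phis)) (bw (wser phis))) D))
      ((fls_const ?g * ?w y) * X)"
    unfolding inv by simp
  moreover have "bser_rep (bmult (bmult (bz (wser phis)) (bw Y)) D) ((fls_const ?g * ?w y) * X)"
    by (intro bser_rep_bmult bser_rep_bw[OF Y] bser_rep_bz[OF lser_rep_wser] D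
        fls2_bounded_mult fls2_bounded_const fls2_bounded_in_w)
  ultimately show ?thesis
    by (rule bser_rep_eq)
qed

theorem proposition1p5:
  fixes sc :: "complex \<Rightarrow> 'a::comm_ring_1"
    and dx :: "'a \<Rightarrow> 'a"
    and V :: "'a set"
    and u :: "'a ser"
    and phi phis :: "nat \<Rightarrow> 'a ser"
  assumes "kdv_setting sc dx V"
    and "ser_in V u"
    and "kdv_solution sc dx u"
    and "is_wave_function sc dx u phi"
    and "is_dual_wave_function sc dx u phi phis"
  shows "Knum sc dx V u =
           bmult (bz (lsq (bser sc dx V u)))
             (bmult (bquot (bw (wser phi)) (bz (wser phi))) (Dnum dx phi phis))
       \<and> Knum sc dx V u =
           bmult (bw (lsq (bser sc dx V u)))
             (bmult (bquot (bz (wser phis)) (bw (wser phis))) (Dnum dx phi phis))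
       \<and> Knum sc dx V u =
           bmult (bmult (bz (wser phis)) (bw (wser phi))) (Dnum dx phi phis)"
proof -
  have dx: "derivation dx" by (rule kdv_setting_derivation[OF assms(1)])
  note b_square = lser_rep_lsq_bser[OF assms(1,2,4,5)]
    and D = bser_rep_Dnum[OF dx, of phi phis] fls2_bounded_cross_wronskian
  show ?thesis
    using Knum_eq_wave_kernel[OF assms(1,2,4,5)]
      bmult_bz_bquot_wave[OF b_square lser_rep_wser D]
      bmult_bw_bquot_wave[OF b_square lser_rep_wser D]
    by simp
qed

end
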